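(* Let $\rho\in\mathbb{R}$ and let $q(x,t)$, $r(x,t)$ be smooth complex-valued functions which solve the coupled system defined in the context, i.e. the compatibility (zero-curvature) condition $P_t-Q_x+[P,Q]=0$ of the Lax pair $$\Psi_x=P(q,r;\lambda)\Psi,\qquad \Psi_t=Q(q,r;\lambda)\Psi$$ described in the context. Let $N\ge 1$ and let $\lambda_1,\dots,\lambda_{2N}$ be spectral parameters, and for each $k=1,\dots,2N$ let $\Phi_k=(\phi_{1,k},\phi_{2,k})^T$ be a solution of this Lax pair with $\lambda=\lambda_k$. Define the $2N\times 2N$ matrices $$B_{12}=\begin{pmatrix} \lambda_1^{2N-2}\phi_{1,1} & \lambda_1^{2N-1}\phi_{2,1} & \lambda_1^{2N-4}\phi_{1,1} & \lambda_1^{2N-3}\phi_{2,1} & \cdots & \phi_{1,1} & \lambda_1\phi_{2,1}\\ \vdots & \vdots & \vdots & \vdots & & \vdots & \vdots\\ \lambda_{2N}^{2N-2}\phi_{1,2N} & \lambda_{2N}^{2N-1}\phi_{2,2N} & \lambda_{2N}^{2N-4}\phi_{1,2N} & \lambda_{2N}^{2N-3}\phi_{2,2N} & \cdots & \phi_{1,2N} & \lambda_{2N}\phi_{2,2N} \end{pmatrix},$$ $$B_{22}=\begin{pmatrix} \lambda_1^{2N-1}\phi_{1,1} & \lambda_1^{2N-2}\phi_{2,1} & \lambda_1^{2N-3}\phi_{1,1} & \cdots & \lambda_1\phi_{1,1} & \phi_{2,1}\\ \vdots & \vdots & \vdots & & \vdots & \vdots\\ \lambda_{2N}^{2N-1}\phi_{1,2N}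 & \lambda_{2N}^{2N-2}\phi_{2,2N} & \lambda_{2N}^{2N-3}\phi_{1,2N} & \cdots & \lambda_{2N}\phi_{1,2N} & \phi_{2,2N} \end{pmatrix},$$ (row $k$ of $B_{12}$ is $(\lambda_k^{2N-2}\phi_{1,k},\lambda_k^{2N-1}\phi_{2,k},\lambda_k^{2N-4}\phi_{1,k},\lambda_k^{2N-3}\phi_{2,k},\dots,\lambda_k^{0}\phi_{1,k},\lambda_k^{1}\phi_{2,k})$ and row $k$ of $B_{22}$ is $(\lambda_k^{2N-1}\phi_{1,k},\lambda_k^{2N-2}\phi_{2,k},\lambda_k^{2N-3}\phi_{1,k},\dots,\lambda_k\phi_{1,k},\phi_{2,k})$). Let $B_{11}$ be obtained from $B_{12}$ by replacing its second column with $(-\lambda_1^{2N}\phi_{1,1},\dots,-\lambda_{2N}^{2N}\phi_{1,2N})^T$, and let $B_{21}$ be obtained from $B_{22}$ by replacing its first column with $(-\lambda_1^{2N}\phi_{2,1},\dots,-\lambda_{2N}^{2N}\phi_{2,2N})^T$. Assuming $|B_{12}|\neq0$ and $|B_{22}|\neq 0$, set $A_{2,N-1}=|B_{11}|/|B_{12}|$ and $A_{3,N-1}=|B_{21}|/|B_{22}|$. Then the $N$-fold Darboux transformation $\Phi\mapsto T(\lambda)\Phi$, with Darboux matrix $$T(\lambda)=\begin{pmatrix}\lambda^{2N}+\sum_{j=0}^{N-1}A_{1,j}\lambda^{2j} & \sum_{j=0}^{N-1}A_{2,j}\lambda^{2j+1}\\ \sum_{j=0}^{N-1}A_{3,j}\lambda^{2j+1}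 & \lambda^{2N}+\sum_{j=0}^{N-1}A_{4,j}\lambda^{2j}\end{pmatrix}$$ whose coefficients are determined by $T(\lambda_k)\Phi_k=0$ for $k=1,\dots,2N$, maps the Lax pair with potentials $(q,r)$ to the Lax pair of the same form with new potentials $$q[N]=q-2\mathrm{i}\rho A_{2,N-1}+A_{2,N-1,x},\qquad r[N]=r+2\mathrm{i}\rho A_{3,N-1}+A_{3,N-1,x},$$ so that $(q[N],r[N])$ is again a solution of the coupled system.
   Context: Subscripts $x,t$ denote partial derivatives; $|B|$ denotes the determinant of $B$; $\rho$ is a real parameter and $\lambda$ a complex spectral parameter. The Lax pair is $\Psi_x=P\Psi$, $\Psi_t=Q\Psi$ with $$P=\begin{pmatrix}-\mathrm{i}\lambda^{-2}+\mathrm{i}\rho & q\lambda^{-1}\\ r\lambda^{-1} & \mathrm{i}\lambda^{-2}-\mathrm{i}\rho\end{pmatrix},\qquad Q=\begin{pmatrix}Q_1&Q_2\\Q_3&-Q_1\end{pmatrix},$$ where $Q_1=-\tfrac{3\mathrm{i}}{2}q^2r^2\lambda^{-2}-4\mathrm{i}\rho^2-r_xq\lambda^{-2}+q_xr\lambda^{-2}-2\mathrm{i}qr\lambda^{-4}+8\mathrm{i}\rho\lambda^{-4}-4\mathrm{i}\lambda^{-6}$, $Q_2=-q_{xx}\lambda^{-1}+3\mathrm{i}q_xqr\lambda^{-1}+2\mathrm{i}q_x\lambda^{-3}+\tfrac32 q^3r^2\lambda^{-1}+2q^2r\rho\lambda^{-1}+2q^2r\lambda^{-3}-4q\rho^2\lambda^{-1}-4q\rho\lambda^{-3}+4q\lambda^{-5}$,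 $Q_3=-r_{xx}\lambda^{-1}-3\mathrm{i}r_xqr\lambda^{-1}-2\mathrm{i}r_x\lambda^{-3}+\tfrac32 q^2r^3\lambda^{-1}+2qr^2\rho\lambda^{-1}+2qr^2\lambda^{-3}-4r\rho^2\lambda^{-1}-4r\rho\lambda^{-3}+4r\lambda^{-5}$. The "coupled system" for $(q,r)$ is the compatibility condition $P_t-Q_x+[P,Q]=0$ of this Lax pair (a coupled higher-order modified self-steepening NLS system). "Maps the Lax pair to the same form with new potentials" means: for every solution $\Psi$ of the Lax pair with potentials $(q,r)$ at spectral parameter $\lambda$, $\Psi[N]=T(\lambda)\Psi$ satisfies $\Psi[N]_x=P(q[N],r[N];\lambda)\Psi[N]$ and $\Psi[N]_t=Q(q[N],r[N];\lambda)\Psi[N]$, i.e. $T_x+TP(q,r)=P(q[N],r[N])T$ and $T_t+TQ(q,r)=Q(q[N],r[N])T$. *)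

theory Defs
  imports "HOL-Analysis.Analysis" "Jordan_Normal_Form.Determinant"
begin

definition pdx :: "(real \<Rightarrow> real \<Rightarrow> complex) \<Rightarrow> real \<Rightarrow> real \<Rightarrow> complex" where
  "pdx f = (\<lambda>x t. vector_derivative (\<lambda>s. f s t) (at x))"

definition pdt :: "(real \<Rightarrow> real \<Rightarrow> complex) \<Rightarrow> real \<Rightarrow> real \<Rightarrow> complex" where
  "pdt f = (\<lambda>x t. vector_derivative (\<lambda>s. f x s) (at t))"

definition pdiff :: "bool list \<Rightarrow> (real \<Rightarrow> real \<Rightarrow> complex) \<Rightarrow> real \<Rightarrow> real \<Rightarrow> complex" where
  "pdiff ws f = foldr (\<lambda>b h. if b then pdx h else pdt h) ws f"

definition smooth2 :: "(real \<Rightarrow> real \<Rightarrow> complex) \<Rightarrow> bool" where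
  "smooth2 f \<longleftrightarrow> (\<forall>ws. continuous_on UNIV (\<lambda>p. pdiff ws f (fst p) (snd p)) \<and>
      (\<forall>x t. (\<lambda>s. pdiff ws f s t) differentiable (at x) \<and> (\<lambda>s. pdiff ws f x s) differentiable (at t)))"

definition mat2 :: "complex \<Rightarrow> complex \<Rightarrow> complex \<Rightarrow> complex \<Rightarrow> complex mat" where
  "mat2 a b c d = mat 2 2 (\<lambda>(i,j). if i = 0 then (if j = 0 then a else b) else (if j = 0 then c else d))"

definition cvec2 :: "complex \<Rightarrow> complex \<Rightarrow> complex vec" where
  "cvec2 a b = vec 2 (\<lambda>i. if i = 0 then a else b)"

definition mdx :: "(real \<Rightarrow> real \<Rightarrow> complex mat) \<Rightarrow> real \<Rightarrow> real \<Rightarrow> complex mat" where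
  "mdx M x t = mat 2 2 (\<lambda>(i,j). pdx (\<lambda>x' t'. M x' t' $$ (i,j)) x t)"

definition mdt :: "(real \<Rightarrow> real \<Rightarrow> complex mat) \<Rightarrow> real \<Rightarrow> real \<Rightarrow> complex mat" where
  "mdt M x t = mat 2 2 (\<lambda>(i,j). pdt (\<lambda>x' t'. M x' t' $$ (i,j)) x t)"

definition LaxP :: "real \<Rightarrow> (real \<Rightarrow> real \<Rightarrow> complex) \<Rightarrow> (real \<Rightarrow> real \<Rightarrow> complex) \<Rightarrow> complex
    \<Rightarrow> real \<Rightarrow> real \<Rightarrow> complex mat" where
  "LaxP \<rho> q r lm x t = mat2
     (- \<i> * lm powi (-2) + \<i> * of_real \<rho>)  (q x t * lm powi (-1))
     (r x t * lm powi (-1))                 (\<i> * lm powi (-2) - \<i> * of_real \<rho>)"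

definition LaxQ1 :: "real \<Rightarrow> (real \<Rightarrow> real \<Rightarrow> complex) \<Rightarrow> (real \<Rightarrow> real \<Rightarrow> complex) \<Rightarrow> complex
    \<Rightarrow> real \<Rightarrow> real \<Rightarrow> complex" where
  "LaxQ1 \<rho> q r lm x t = (let \<rho>' = complex_of_real \<rho>; qq = q x t; rr = r x t in
       - (3 * \<i> / 2) * qq^2 * rr^2 * lm powi (-2) - 4 * \<i> * \<rho>'^2
       - pdx r x t * qq * lm powi (-2) + pdx q x t * rr * lm powi (-2)
       - 2 * \<i> * qq * rr * lm powi (-4) + 8 * \<i> * \<rho>' * lm powi (-4) - 4 * \<i> * lm powi (-6))"

definition LaxQ2 :: "real \<Rightarrow> (real \<Rightarrow> real \<Rightarrow> complex) \<Rightarrow> (real \<Rightarrow> real \<Rightarrow> complex) \<Rightarrow> complex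
    \<Rightarrow> real \<Rightarrow> real \<Rightarrow> complex" where
  "LaxQ2 \<rho> q r lm x t = (let \<rho>' = complex_of_real \<rho>; qq = q x t; rr = r x t in
       - pdx (pdx q) x t * lm powi (-1) + 3 * \<i> * pdx q x t * qq * rr * lm powi (-1)
       + 2 * \<i> * pdx q x t * lm powi (-3) + (3/2) * qq^3 * rr^2 * lm powi (-1)
       + 2 * qq^2 * rr * \<rho>' * lm powi (-1) + 2 * qq^2 * rr * lm powi (-3)
       - 4 * qq * \<rho>'^2 * lm powi (-1) - 4 * qq * \<rho>' * lm powi (-3) + 4 * qq * lm powi (-5))"

definition LaxQ3 :: "real \<Rightarrow> (real \<Rightarrow> real \<Rightarrow> complex) \<Rightarrow> (real \<Rightarrow> real \<Rightarrow> complex) \<Rightarrow> complex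
    \<Rightarrow> real \<Rightarrow> real \<Rightarrow> complex" where
  "LaxQ3 \<rho> q r lm x t = (let \<rho>' = complex_of_real \<rho>; qq = q x t; rr = r x t in
       - pdx (pdx r) x t * lm powi (-1) - 3 * \<i> * pdx r x t * qq * rr * lm powi (-1)
       - 2 * \<i> * pdx r x t * lm powi (-3) + (3/2) * qq^2 * rr^3 * lm powi (-1)
       + 2 * qq * rr^2 * \<rho>' * lm powi (-1) + 2 * qq * rr^2 * lm powi (-3)
       - 4 * rr * \<rho>'^2 * lm powi (-1) - 4 * rr * \<rho>' * lm powi (-3) + 4 * rr * lm powi (-5))"

definition LaxQ :: "real \<Rightarrow> (real \<Rightarrow> real \<Rightarrow> complex) \<Rightarrow> (real \<Rightarrow> real \<Rightarrow> complex) \<Rightarrow> complex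
    \<Rightarrow> real \<Rightarrow> real \<Rightarrow> complex mat" where
  "LaxQ \<rho> q r lm x t = mat2 (LaxQ1 \<rho> q r lm x t) (LaxQ2 \<rho> q r lm x t)
                            (LaxQ3 \<rho> q r lm x t) (- LaxQ1 \<rho> q r lm x t)"

definition solves_coupled :: "real \<Rightarrow> (real \<Rightarrow> real \<Rightarrow> complex) \<Rightarrow> (real \<Rightarrow> real \<Rightarrow> complex) \<Rightarrow> bool" where
  "solves_coupled \<rho> q r \<longleftrightarrow> smooth2 q \<and> smooth2 r \<and>
     (\<forall>lm. lm \<noteq> 0 \<longrightarrow> (\<forall>x t.
        mdt (LaxP \<rho> q r lm) x t - mdx (LaxQ \<rho> q r lm) x t
        + (LaxP \<rho> q r lm x t * LaxQ \<rho> q r lm x t - LaxQ \<rho> q r lm x t * LaxP \<rho> q r lm x t)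
        = 0\<^sub>m 2 2))"

definition lax_solution :: "real \<Rightarrow> (real \<Rightarrow> real \<Rightarrow> complex) \<Rightarrow> (real \<Rightarrow> real \<Rightarrow> complex) \<Rightarrow> complex
    \<Rightarrow> (real \<Rightarrow> real \<Rightarrow> complex) \<Rightarrow> (real \<Rightarrow> real \<Rightarrow> complex) \<Rightarrow> bool" where
  "lax_solution \<rho> q r lm f1 f2 \<longleftrightarrow> smooth2 f1 \<and> smooth2 f2 \<and>
     (\<forall>x t. cvec2 (pdx f1 x t) (pdx f2 x t) = LaxP \<rho> q r lm x t *\<^sub>v cvec2 (f1 x t) (f2 x t)
          \<and> cvec2 (pdt f1 x t) (pdt f2 x t) = LaxQ \<rho> q r lm x t *\<^sub>v cvec2 (f1 x t) (f2 x t))"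

(* The 2N x 2N matrices; rows k = 0..2N-1 correspond to \<lambda>_{k+1}, columns c = 0..2N-1. *)
definition matB12 :: "nat \<Rightarrow> (nat \<Rightarrow> complex) \<Rightarrow> (nat \<Rightarrow> complex) \<Rightarrow> (nat \<Rightarrow> complex) \<Rightarrow> complex mat" where
  "matB12 N lam p1 p2 = mat (2*N) (2*N) (\<lambda>(k,c).
      if even c then lam k ^ (2*N - 2 - c) * p1 k else lam k ^ (2*N - c) * p2 k)"

definition matB22 :: "nat \<Rightarrow> (nat \<Rightarrow> complex) \<Rightarrow> (nat \<Rightarrow> complex) \<Rightarrow> (nat \<Rightarrow> complex) \<Rightarrow> complex mat" where
  "matB22 N lam p1 p2 = mat (2*N) (2*N) (\<lambda>(k,c).
      if even c then lam k ^ (2*N - 1 - c) * p1 k else lam k ^ (2*N - 1 - c) * p2 k)"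

definition matB11 :: "nat \<Rightarrow> (nat \<Rightarrow> complex) \<Rightarrow> (nat \<Rightarrow> complex) \<Rightarrow> (nat \<Rightarrow> complex) \<Rightarrow> complex mat" where
  "matB11 N lam p1 p2 = mat (2*N) (2*N) (\<lambda>(k,c).
      if c = 1 then - (lam k ^ (2*N) * p1 k) else matB12 N lam p1 p2 $$ (k,c))"

definition matB21 :: "nat \<Rightarrow> (nat \<Rightarrow> complex) \<Rightarrow> (nat \<Rightarrow> complex) \<Rightarrow> (nat \<Rightarrow> complex) \<Rightarrow> complex mat" where
  "matB21 N lam p1 p2 = mat (2*N) (2*N) (\<lambda>(k,c).
      if c = 0 then - (lam k ^ (2*N) * p2 k) else matB22 N lam p1 p2 $$ (k,c))"

definition darbouxT :: "nat \<Rightarrow> (nat \<Rightarrow> real \<Rightarrow> real \<Rightarrow> complex) \<Rightarrow> (nat \<Rightarrow> real \<Rightarrow> real \<Rightarrow> complex)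
    \<Rightarrow> (nat \<Rightarrow> real \<Rightarrow> real \<Rightarrow> complex) \<Rightarrow> (nat \<Rightarrow> real \<Rightarrow> real \<Rightarrow> complex) \<Rightarrow> complex
    \<Rightarrow> real \<Rightarrow> real \<Rightarrow> complex mat" where
  "darbouxT N A1 A2 A3 A4 lm x t = mat2
     (lm^(2*N) + (\<Sum>j<N. A1 j x t * lm^(2*j)))  (\<Sum>j<N. A2 j x t * lm^(2*j+1))
     (\<Sum>j<N. A3 j x t * lm^(2*j+1))  (lm^(2*N) + (\<Sum>j<N. A4 j x t * lm^(2*j)))"

definition coefA2 :: "nat \<Rightarrow> (nat \<Rightarrow> complex) \<Rightarrow> (nat \<Rightarrow> real \<Rightarrow> real \<Rightarrow> complex)
    \<Rightarrow> (nat \<Rightarrow> real \<Rightarrow> real \<Rightarrow> complex) \<Rightarrow> real \<Rightarrow> real \<Rightarrow> complex" where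
  "coefA2 N lam phi1 phi2 x t = det (matB11 N lam (\<lambda>k. phi1 k x t) (\<lambda>k. phi2 k x t))
                               / det (matB12 N lam (\<lambda>k. phi1 k x t) (\<lambda>k. phi2 k x t))"

definition coefA3 :: "nat \<Rightarrow> (nat \<Rightarrow> complex) \<Rightarrow> (nat \<Rightarrow> real \<Rightarrow> real \<Rightarrow> complex)
    \<Rightarrow> (nat \<Rightarrow> real \<Rightarrow> real \<Rightarrow> complex) \<Rightarrow> real \<Rightarrow> real \<Rightarrow> complex" where
  "coefA3 N lam phi1 phi2 x t = det (matB21 N lam (\<lambda>k. phi1 k x t) (\<lambda>k. phi2 k x t))
                               / det (matB22 N lam (\<lambda>k. phi1 k x t) (\<lambda>k. phi2 k x t))"

end

(*
  T(lambda) is pinned down by T(lambda_k) Phi_k = 0 (k = 1..2N), a linear system for its coefficients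
  with matrices B12 and B22.  Cramer's rule identifies A_{2,N-1} = |B11|/|B12|, A_{3,N-1} = |B21|/|B22|
  and shows that all coefficients of T are smooth.

  Up to powers of lambda, every entry of D = T_x + T P - P[N] T is a polynomial in lambda^2.  Its
  coefficients of order >= N vanish identically (for order N this is the choice of q[N], r[N]), and
  differentiating T(lambda_k) Phi_k = 0 gives D(lambda_k) Phi_k = 0: a homogeneous system with matrix
  B12 or B22 for the remaining coefficients, so D = 0.  The t-part is the same argument, except that
  the three lowest orders of T_t + T Q - Q[N] T have to be checked by hand, from the lowest-order
  relations of the x-part and their x-derivatives.

  Cross-differentiating T_x = P[N] T - T P and T_t = Q[N] T - T Q yields Z[N] T = T Z = 0 for the
  zero-curvature defects Z, Z[N] of the old and new potentials.  Since det T(lambda) is a monic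
  polynomial in lambda^2, T(lambda) is invertible for all but finitely many lambda, and Z[N] = 0
  follows by continuity in lambda.
*)

theory Submission
  imports Defs
begin

section \<open>Smooth functions of two real variables\<close>

lemma pdiff_Nil [simp]: "pdiff [] f = f"
  by (simp add: pdiff_def)

lemma pdiff_Cons: "pdiff (b # ws) f = (if b then pdx (pdiff ws f) else pdt (pdiff ws f))"
  by (simp add: pdiff_def)

lemma pdiff_append_single: "pdiff (ws @ [b]) f = pdiff ws (if b then pdx f else pdt f)"
  by (simp add: pdiff_def)

definition cont_pdiffable :: "(real \<Rightarrow> real \<Rightarrow> complex) \<Rightarrow> bool" where
  "cont_pdiffable f \<longleftrightarrow> continuous_on UNIV (\<lambda>p. f (fst p) (snd p)) \<and>
     (\<forall>x t. (\<lambda>s. f s t) differentiable (at x) \<and> (\<lambda>s. f x s) differentiable (at t))"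

lemma smooth2_iff_pdiff: "smooth2 f \<longleftrightarrow> (\<forall>ws. cont_pdiffable (pdiff ws f))"
  by (simp add: smooth2_def cont_pdiffable_def)

lemma smooth2_imp_cont_pdiffable: "smooth2 f \<Longrightarrow> cont_pdiffable f"
  using smooth2_iff_pdiff[of f] by (metis pdiff_Nil)

lemma smooth2_pdx [simp]: "smooth2 f \<Longrightarrow> smooth2 (pdx f)"
  unfolding smooth2_iff_pdiff by (metis pdiff_append_single)

lemma smooth2_pdt [simp]: "smooth2 f \<Longrightarrow> smooth2 (pdt f)"
  unfolding smooth2_iff_pdiff by (metis (full_types) pdiff_append_single)

lemma cont_pdiffable_has_pdx: "cont_pdiffable f \<Longrightarrow> ((\<lambda>s. f s t) has_vector_derivative pdx f x t) (at x)"
  unfolding cont_pdiffable_def pdx_def using vector_derivative_works by blast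

lemma cont_pdiffable_has_pdt: "cont_pdiffable f \<Longrightarrow> ((\<lambda>s. f x s) has_vector_derivative pdt f x t) (at t)"
  unfolding cont_pdiffable_def pdt_def using vector_derivative_works by blast

lemmas smooth2_has_pdx = cont_pdiffable_has_pdx[OF smooth2_imp_cont_pdiffable]
lemmas smooth2_has_pdt = cont_pdiffable_has_pdt[OF smooth2_imp_cont_pdiffable]

lemma pdx_eqI: "(\<And>x t. ((\<lambda>s. f s t) has_vector_derivative D x t) (at x)) \<Longrightarrow> pdx f = D"
  unfolding pdx_def by (intro ext vector_derivative_at) auto

lemma pdt_eqI: "(\<And>x t. ((\<lambda>s. f x s) has_vector_derivative D x t) (at t)) \<Longrightarrow> pdt f = D"
  unfolding pdt_def by (intro ext vector_derivative_at) auto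

lemma pdx_const [simp]: "pdx (\<lambda>x t. c) = (\<lambda>x t. 0)"
  by (rule pdx_eqI) auto

lemma pdt_const [simp]: "pdt (\<lambda>x t. c) = (\<lambda>x t. 0)"
  by (rule pdt_eqI) auto

lemma pdx_zero_funD: "F = (\<lambda>x t. 0) \<Longrightarrow> pdx F a b = G \<Longrightarrow> G = 0"
  by simp

lemma cont_pdiffable_const: "cont_pdiffable (\<lambda>x t. c)"
  by (auto simp: cont_pdiffable_def)

lemma cont_pdiffable_add: "cont_pdiffable f \<Longrightarrow> cont_pdiffable g \<Longrightarrow> cont_pdiffable (\<lambda>x t. f x t + g x t)"
  unfolding cont_pdiffable_def by (auto intro!: continuous_intros differentiable_add)

lemma cont_pdiffable_mult: "cont_pdiffable f \<Longrightarrow> cont_pdiffable g \<Longrightarrow> cont_pdiffable (\<lambda>x t. f x t * g x t)"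
  unfolding cont_pdiffable_def by (auto intro!: continuous_intros differentiable_mult)

lemma pdx_add_general:
  "cont_pdiffable f \<Longrightarrow> cont_pdiffable g \<Longrightarrow> pdx (\<lambda>x t. f x t + g x t) = (\<lambda>x t. pdx f x t + pdx g x t)"
  by (rule pdx_eqI) (intro has_vector_derivative_add cont_pdiffable_has_pdx)

lemma pdt_add_general:
  "cont_pdiffable f \<Longrightarrow> cont_pdiffable g \<Longrightarrow> pdt (\<lambda>x t. f x t + g x t) = (\<lambda>x t. pdt f x t + pdt g x t)"
  by (rule pdt_eqI) (intro has_vector_derivative_add cont_pdiffable_has_pdt)

lemma pdx_mult_general: "cont_pdiffable f \<Longrightarrow> cont_pdiffable g \<Longrightarrow>
    pdx (\<lambda>x t. f x t * g x t) = (\<lambda>x t. pdx f x t * g x t + f x t * pdx g x t)"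
  by (rule pdx_eqI, rule has_vector_derivative_eq_rhs,
      rule has_vector_derivative_mult[OF cont_pdiffable_has_pdx cont_pdiffable_has_pdx]) auto

lemma pdt_mult_general: "cont_pdiffable f \<Longrightarrow> cont_pdiffable g \<Longrightarrow>
    pdt (\<lambda>x t. f x t * g x t) = (\<lambda>x t. pdt f x t * g x t + f x t * pdt g x t)"
  by (rule pdt_eqI, rule has_vector_derivative_eq_rhs,
      rule has_vector_derivative_mult[OF cont_pdiffable_has_pdt cont_pdiffable_has_pdt]) auto

text \<open>
  Smoothness is proved for whole algebras at once: if every generator is continuous and
  partially differentiable with partial derivatives in the generated algebra, then so is
  every element, hence every iterated partial derivative of it.
\<close>

inductive_set fun_algebra :: "(real \<Rightarrow> real \<Rightarrow> complex) set \<Rightarrow> (real \<Rightarrow> real \<Rightarrow> complex) set"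
  for S where
  generator: "f \<in> S \<Longrightarrow> f \<in> fun_algebra S"
| const: "(\<lambda>x t. c) \<in> fun_algebra S"
| add: "f \<in> fun_algebra S \<Longrightarrow> g \<in> fun_algebra S \<Longrightarrow> (\<lambda>x t. f x t + g x t) \<in> fun_algebra S"
| mult: "f \<in> fun_algebra S \<Longrightarrow> g \<in> fun_algebra S \<Longrightarrow> (\<lambda>x t. f x t * g x t) \<in> fun_algebra S"

definition closed_generators :: "(real \<Rightarrow> real \<Rightarrow> complex) set \<Rightarrow> bool" where
  "closed_generators S \<longleftrightarrow>
     (\<forall>f\<in>S. cont_pdiffable f \<and> pdx f \<in> fun_algebra S \<and> pdt f \<in> fun_algebra S)"

lemma fun_algebra_closed:
  assumes "closed_generators S" and "h \<in> fun_algebra S"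
  shows "cont_pdiffable h \<and> pdx h \<in> fun_algebra S \<and> pdt h \<in> fun_algebra S"
  using assms(2)
proof induction
  case (generator f)
  then show ?case using assms(1) by (simp add: closed_generators_def)
next
  case (const c)
  then show ?case by (auto simp: cont_pdiffable_const intro: fun_algebra.const)
next
  case (add f g)
  then show ?case
    by (auto simp: cont_pdiffable_add pdx_add_general pdt_add_general intro!: fun_algebra.add)
next
  case (mult f g)
  then show ?case
    by (auto simp: cont_pdiffable_mult pdx_mult_general pdt_mult_general
        intro!: fun_algebra.add fun_algebra.mult)
qed

lemma fun_algebra_smooth2:
  assumes S: "closed_generators S" and h: "h \<in> fun_algebra S"
  shows "smooth2 h"
proof -
  have "pdiff ws h \<in> fun_algebra S" for ws
    by (induction ws) (use h fun_algebra_closed[OF S] in \<open>auto simp: pdiff_Cons\<close>)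
  then show ?thesis
    unfolding smooth2_iff_pdiff using fun_algebra_closed[OF S] by blast
qed

definition pdiffs :: "(real \<Rightarrow> real \<Rightarrow> complex) \<Rightarrow> (real \<Rightarrow> real \<Rightarrow> complex) set" where
  "pdiffs f = range (\<lambda>ws. pdiff ws f)"

lemma self_in_pdiffs: "f \<in> pdiffs f"
  unfolding pdiffs_def by (metis pdiff_Nil rangeI)

lemma pdx_pdiff_in_pdiffs: "pdx (pdiff ws f) \<in> pdiffs f"
  and pdt_pdiff_in_pdiffs: "pdt (pdiff ws f) \<in> pdiffs f"
  unfolding pdiffs_def by (metis pdiff_Cons rangeI)+

lemma closed_generators_pdiffs:
  assumes "smooth2 f" "smooth2 g"
  shows "closed_generators (pdiffs f \<union> pdiffs g)"
  using assms pdx_pdiff_in_pdiffs pdt_pdiff_in_pdiffs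
  unfolding closed_generators_def smooth2_iff_pdiff
  by (auto simp: pdiffs_def intro!: fun_algebra.generator)

lemma smooth2_const [simp, intro]: "smooth2 (\<lambda>x t. c)"
  by (rule fun_algebra_smooth2[where S="{}"]) (auto simp: closed_generators_def intro: fun_algebra.const)

lemma smooth2_add [simp, intro]:
  assumes "smooth2 f" "smooth2 g"
  shows "smooth2 (\<lambda>x t. f x t + g x t)"
  by (rule fun_algebra_smooth2[OF closed_generators_pdiffs[OF assms]],
      intro fun_algebra.add fun_algebra.generator) (simp_all add: self_in_pdiffs)

lemma smooth2_mult [simp, intro]:
  assumes "smooth2 f" "smooth2 g"
  shows "smooth2 (\<lambda>x t. f x t * g x t)"
  by (rule fun_algebra_smooth2[OF closed_generators_pdiffs[OF assms]],
      intro fun_algebra.mult fun_algebra.generator) (simp_all add: self_in_pdiffs)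

lemma smooth2_uminus [simp, intro]: "smooth2 f \<Longrightarrow> smooth2 (\<lambda>x t. - f x t)"
  using smooth2_mult[OF smooth2_const[of "-1"], of f] by simp

lemma smooth2_diff [simp, intro]: "smooth2 f \<Longrightarrow> smooth2 g \<Longrightarrow> smooth2 (\<lambda>x t. f x t - g x t)"
  using smooth2_add[of f "\<lambda>x t. - g x t"] by simp

lemma smooth2_power [simp, intro]: "smooth2 f \<Longrightarrow> smooth2 (\<lambda>x t. f x t ^ n)"
  by (induction n) auto

lemma smooth2_sum [intro]: "(\<And>i. i \<in> I \<Longrightarrow> smooth2 (f i)) \<Longrightarrow> smooth2 (\<lambda>x t. \<Sum>i\<in>I. f i x t)"
proof (induction I rule: infinite_finite_induct)
  case (insert i I)
  then show ?case using smooth2_add[of "f i" "\<lambda>x t. \<Sum>i\<in>I. f i x t"] by simp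
qed auto

lemma smooth2_prod [intro]: "(\<And>i. i \<in> I \<Longrightarrow> smooth2 (f i)) \<Longrightarrow> smooth2 (\<lambda>x t. \<Prod>i\<in>I. f i x t)"
proof (induction I rule: infinite_finite_induct)
  case (insert i I)
  then show ?case using smooth2_mult[of "f i" "\<lambda>x t. \<Prod>i\<in>I. f i x t"] by simp
qed auto

lemma smooth2_inverse [intro]:
  assumes g: "smooth2 g" and nz: "\<And>x t. g x t \<noteq> 0"
  shows "smooth2 (\<lambda>x t. inverse (g x t))"
proof -
  define ginv where "ginv = (\<lambda>x t. inverse (g x t))"
  define S where "S = pdiffs g \<union> {ginv}"
  have g_in: "pdiff ws g \<in> fun_algebra S" for ws
    unfolding S_def pdiffs_def by (auto intro: fun_algebra.generator)
  have ginv_in: "ginv \<in> fun_algebra S"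
    unfolding S_def by (auto intro: fun_algebra.generator)
  have has_x: "((\<lambda>s. ginv s t) has_vector_derivative pdx g x t * (- (ginv x t * ginv x t))) (at x)"
    for x t
    using field_vector_diff_chain_at[OF smooth2_has_pdx[OF g] DERIV_inverse[OF nz]]
    by (simp add: o_def ginv_def power2_eq_square)
  have has_t: "((\<lambda>s. ginv x s) has_vector_derivative pdt g x t * (- (ginv x t * ginv x t))) (at t)"
    for x t
    using field_vector_diff_chain_at[OF smooth2_has_pdt[OF g] DERIV_inverse[OF nz]]
    by (simp add: o_def ginv_def power2_eq_square)
  have "cont_pdiffable ginv"
    unfolding cont_pdiffable_def
  proof (intro conjI allI)
    show "continuous_on UNIV (\<lambda>p. ginv (fst p) (snd p))"
      using smooth2_imp_cont_pdiffable[OF g] nz unfolding cont_pdiffable_def ginv_def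
      by (auto intro!: continuous_intros)
    show "(\<lambda>s. ginv s t) differentiable at x" "(\<lambda>s. ginv x s) differentiable at t" for x t
      using has_x has_t by (blast intro: differentiableI_vector)+
  qed
  moreover have "pdx ginv \<in> fun_algebra S" "pdt ginv \<in> fun_algebra S"
  proof -
    have "pdx ginv = (\<lambda>x t. pdx g x t * ((- 1) * (ginv x t * ginv x t)))"
      by (rule pdx_eqI) (use has_x in simp)
    moreover have "pdt ginv = (\<lambda>x t. pdt g x t * ((- 1) * (ginv x t * ginv x t)))"
      by (rule pdt_eqI) (use has_t in simp)
    moreover have "pdx g \<in> fun_algebra S" "pdt g \<in> fun_algebra S"
      using g_in[of "[True]"] g_in[of "[False]"] by (simp_all add: pdiff_Cons)
    ultimately show "pdx ginv \<in> fun_algebra S" "pdt ginv \<in> fun_algebra S"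
      by (simp_all only:) (intro fun_algebra.mult fun_algebra.const ginv_in; assumption)+
  qed
  moreover have "cont_pdiffable h \<and> pdx h \<in> fun_algebra S \<and> pdt h \<in> fun_algebra S"
    if h_in: "h \<in> pdiffs g" for h
  proof -
    obtain ws where h: "h = pdiff ws g" using h_in unfolding pdiffs_def by blast
    show ?thesis
      using g g_in[of "True # ws"] g_in[of "False # ws"]
      unfolding h smooth2_iff_pdiff by (simp add: pdiff_Cons)
  qed
  ultimately have "closed_generators S"
    unfolding closed_generators_def S_def by blast
  then show ?thesis
    using fun_algebra_smooth2 ginv_in unfolding ginv_def by blast
qed

lemma smooth2_divide [intro]:
  "smooth2 f \<Longrightarrow> smooth2 g \<Longrightarrow> (\<And>x t. g x t \<noteq> 0) \<Longrightarrow> smooth2 (\<lambda>x t. f x t / g x t)"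
  using smooth2_mult[OF _ smooth2_inverse, of f g] by (simp add: divide_inverse)

lemma smooth2_if [intro]: "smooth2 f \<Longrightarrow> smooth2 g \<Longrightarrow> smooth2 (\<lambda>x t. if P then f x t else g x t)"
  by (cases P) auto

lemma smooth2_det:
  assumes "\<And>i j. i < n \<Longrightarrow> j < n \<Longrightarrow> smooth2 (\<lambda>x t. F x t $$ (i,j))"
    and "\<And>x t. F x t \<in> carrier_mat n n"
  shows "smooth2 (\<lambda>x t. det (F x t))"
proof -
  have "(\<lambda>x t. det (F x t)) =
      (\<lambda>x t. \<Sum>p\<in>{p. p permutes {0..<n}}. signof p * (\<Prod>i\<in>{0..<n}. F x t $$ (i, p i)))"
    using assms(2) by (intro ext) (simp add: det_def')
  moreover have "smooth2 (\<lambda>x t. \<Prod>i\<in>{0..<n}. F x t $$ (i, p i))" if "p permutes {0..<n}" for p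
    using that permutes_in_image[OF that] by (intro smooth2_prod) (auto intro: assms(1))
  ultimately show ?thesis by auto
qed

lemma pdx_add [simp]:
  "smooth2 f \<Longrightarrow> smooth2 g \<Longrightarrow> pdx (\<lambda>x t. f x t + g x t) = (\<lambda>x t. pdx f x t + pdx g x t)"
  by (intro pdx_add_general smooth2_imp_cont_pdiffable)

lemma pdt_add [simp]:
  "smooth2 f \<Longrightarrow> smooth2 g \<Longrightarrow> pdt (\<lambda>x t. f x t + g x t) = (\<lambda>x t. pdt f x t + pdt g x t)"
  by (intro pdt_add_general smooth2_imp_cont_pdiffable)

lemma pdx_mult [simp]: "smooth2 f \<Longrightarrow> smooth2 g \<Longrightarrow>
    pdx (\<lambda>x t. f x t * g x t) = (\<lambda>x t. pdx f x t * g x t + f x t * pdx g x t)"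
  by (intro pdx_mult_general smooth2_imp_cont_pdiffable)

lemma pdt_mult [simp]: "smooth2 f \<Longrightarrow> smooth2 g \<Longrightarrow>
    pdt (\<lambda>x t. f x t * g x t) = (\<lambda>x t. pdt f x t * g x t + f x t * pdt g x t)"
  by (intro pdt_mult_general smooth2_imp_cont_pdiffable)

lemma pdx_uminus [simp]: "smooth2 f \<Longrightarrow> pdx (\<lambda>x t. - f x t) = (\<lambda>x t. - pdx f x t)"
  using pdx_mult[OF smooth2_const[of "-1"], of f] by simp

lemma pdt_uminus [simp]: "smooth2 f \<Longrightarrow> pdt (\<lambda>x t. - f x t) = (\<lambda>x t. - pdt f x t)"
  using pdt_mult[OF smooth2_const[of "-1"], of f] by simp

lemma pdx_diff [simp]:
  "smooth2 f \<Longrightarrow> smooth2 g \<Longrightarrow> pdx (\<lambda>x t. f x t - g x t) = (\<lambda>x t. pdx f x t - pdx g x t)"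
  using pdx_add[of f "\<lambda>x t. - g x t"] by simp

lemma pdt_diff [simp]:
  "smooth2 f \<Longrightarrow> smooth2 g \<Longrightarrow> pdt (\<lambda>x t. f x t - g x t) = (\<lambda>x t. pdt f x t - pdt g x t)"
  using pdt_add[of f "\<lambda>x t. - g x t"] by simp

lemma pdx_power [simp]:
  "smooth2 f \<Longrightarrow> pdx (\<lambda>x t. f x t ^ Suc n) = (\<lambda>x t. of_nat (Suc n) * f x t ^ n * pdx f x t)"
proof (induction n)
  case (Suc n)
  have "pdx (\<lambda>x t. f x t ^ Suc (Suc n)) = pdx (\<lambda>x t. f x t * f x t ^ Suc n)"
    by simp
  also have "\<dots> = (\<lambda>x t. pdx f x t * f x t ^ Suc n + f x t * pdx (\<lambda>x t. f x t ^ Suc n) x t)"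
    using Suc.prems by (subst pdx_mult) (auto simp del: power_Suc)
  finally show ?case using Suc by (simp add: algebra_simps)
qed simp

lemma pdx_sum [simp]:
  "\<forall>i\<in>I. smooth2 (f i) \<Longrightarrow> pdx (\<lambda>x t. \<Sum>i\<in>I. f i x t) = (\<lambda>x t. \<Sum>i\<in>I. pdx (f i) x t)"
proof (induction I rule: infinite_finite_induct)
  case (insert i I)
  then show ?case using pdx_add[of "f i" "\<lambda>x t. \<Sum>i\<in>I. f i x t"] by (simp add: smooth2_sum)
qed auto

lemma pdt_sum [simp]:
  "\<forall>i\<in>I. smooth2 (f i) \<Longrightarrow> pdt (\<lambda>x t. \<Sum>i\<in>I. f i x t) = (\<lambda>x t. \<Sum>i\<in>I. pdt (f i) x t)"
proof (induction I rule: infinite_finite_induct)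
  case (insert i I)
  then show ?case using pdt_add[of "f i" "\<lambda>x t. \<Sum>i\<in>I. f i x t"] by (simp add: smooth2_sum)
qed auto

lemma smooth2_sum' [simp]: "\<forall>i\<in>I. smooth2 (f i) \<Longrightarrow> smooth2 (\<lambda>x t. \<Sum>i\<in>I. f i x t)"
  by (rule smooth2_sum) auto

lemma smooth2_divide_const [simp]: "smooth2 f \<Longrightarrow> smooth2 (\<lambda>x t. f x t / c)"
  using smooth2_mult[OF _ smooth2_const[of "inverse c"], of f] by (simp add: divide_inverse)

lemma pdx_divide_const [simp]: "smooth2 f \<Longrightarrow> pdx (\<lambda>x t. f x t / c) = (\<lambda>x t. pdx f x t / c)"
  using pdx_mult[OF _ smooth2_const[of "inverse c"], of f] by (simp add: divide_inverse)

lemma continuous_on_slice_x: "smooth2 f \<Longrightarrow> continuous_on S (\<lambda>s. f s t)"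
proof -
  assume "smooth2 f"
  then have c: "continuous_on UNIV (\<lambda>p. f (fst p) (snd p))"
    using smooth2_imp_cont_pdiffable cont_pdiffable_def by blast
  have "continuous_on S ((\<lambda>p. f (fst p) (snd p)) \<circ> (\<lambda>s. (s, t)))"
    by (rule continuous_on_compose) (auto intro!: continuous_intros continuous_on_subset[OF c])
  then show ?thesis by (simp add: o_def)
qed

lemma continuous_on_swap_args: "smooth2 f \<Longrightarrow> continuous_on S (\<lambda>(\<tau>, s). f s \<tau>)"
proof -
  assume "smooth2 f"
  then have c: "continuous_on UNIV (\<lambda>p. f (fst p) (snd p))"
    using smooth2_imp_cont_pdiffable cont_pdiffable_def by blast
  have "continuous_on S ((\<lambda>p. f (fst p) (snd p)) \<circ> (\<lambda>p. (snd p, fst p)))"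
    by (rule continuous_on_compose) (auto intro!: continuous_intros continuous_on_subset[OF c])
  then show ?thesis by (simp add: o_def case_prod_beta)
qed

text \<open>
  Schwarz's theorem, via the fundamental theorem of calculus in \<open>x\<close> and differentiation
  under the integral sign in \<open>t\<close>.
\<close>

lemma pdt_pdx_commute_at:
  assumes f: "smooth2 f"
  shows "pdt (pdx f) x0 t0 = pdx (pdt f) x0 t0"
proof -
  define g where "g = pdx f"
  define h where "h = pdt g"
  have g: "smooth2 g" and h: "smooth2 h"
    using f by (simp_all add: g_def h_def)
  define a where "a = x0 - 1"
  define b where "b = x0 + 1"
  have ftc: "f x t - f a t = integral {a..x} (\<lambda>s. g s t)" if "a \<le> x" for x t
  proof -
    have "((\<lambda>s. g s t) has_integral (f x t - f a t)) {a..x}"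
      by (rule fundamental_theorem_of_calculus[OF that])
         (auto simp: g_def intro!: has_vector_derivative_at_within smooth2_has_pdx f)
    then show ?thesis by (simp add: integral_unique)
  qed
  have pdt_diff_eq: "pdt f x t - pdt f a t = integral {a..x} (\<lambda>s. h s t)" if ax: "a \<le> x" for x t
  proof -
    have leibniz: "((\<lambda>\<tau>. integral (cbox a x) (\<lambda>s. g s \<tau>)) has_vector_derivative
        integral (cbox a x) (\<lambda>s. h s t)) (at t within UNIV)"
    proof (rule leibniz_rule_vector_derivative[where f="\<lambda>\<tau> s. g s \<tau>" and fx="\<lambda>\<tau> s. h s \<tau>"])
      fix \<tau> s
      show "((\<lambda>\<tau>. g s \<tau>) has_vector_derivative h s \<tau>) (at \<tau> within UNIV)"
        unfolding h_def using smooth2_has_pdt[OF g] by simp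
    next
      fix \<tau>
      show "(\<lambda>s. g s \<tau>) integrable_on cbox a x"
        by (simp add: integrable_continuous_interval continuous_on_slice_x[OF g])
    next
      show "continuous_on (UNIV \<times> cbox a x) (\<lambda>(\<tau>, s). h s \<tau>)"
        by (rule continuous_on_swap_args[OF h])
    qed auto
    have D: "((\<lambda>\<tau>. f x \<tau> - f a \<tau>) has_vector_derivative pdt f x t - pdt f a t) (at t)"
      by (intro has_vector_derivative_diff smooth2_has_pdt f)
    have "(\<lambda>\<tau>. f x \<tau> - f a \<tau>) = (\<lambda>\<tau>. integral (cbox a x) (\<lambda>s. g s \<tau>))"
      using ftc[OF ax] by auto
    with D leibniz show ?thesis by (metis vector_derivative_unique_at box_real(2))
  qed
  have I: "((\<lambda>x. pdt f a t0 + integral {a..x} (\<lambda>s. h s t0)) has_vector_derivative h x0 t0)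
      (at x0 within {a..b})"
    using integral_has_vector_derivative[OF continuous_on_slice_x[OF h], of x0 a b]
    by (auto simp: a_def b_def intro!: derivative_eq_intros)
  have "((\<lambda>x. pdt f x t0) has_vector_derivative h x0 t0) (at x0 within {a..b})"
  proof (rule has_vector_derivative_transform[OF _ _ I])
    show "x0 \<in> {a..b}" by (simp add: a_def b_def)
    fix x assume "x \<in> {a..b}"
    then show "pdt f x t0 = pdt f a t0 + integral {a..x} (\<lambda>s. h s t0)"
      using pdt_diff_eq[of x t0] by (simp add: algebra_simps)
  qed
  moreover have "at x0 within {a..b} = at x0"
    by (rule at_within_interior) (simp add: a_def b_def)
  ultimately have "pdx (pdt f) x0 t0 = h x0 t0"
    unfolding pdx_def by (intro vector_derivative_at) simp
  then show ?thesis by (simp add: h_def g_def)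
qed

lemma pdt_pdx_commute: "smooth2 f \<Longrightarrow> pdt (pdx f) = pdx (pdt f)"
  using pdt_pdx_commute_at by blast

section \<open>2x2 matrices\<close>

lemma less_2_cases: "(i::nat) < 2 \<longleftrightarrow> i = 0 \<or> i = 1"
  by auto

lemma mat2_carrier [simp]: "mat2 a b c d \<in> carrier_mat 2 2"
  by (simp add: mat2_def)

lemma mat2_index [simp]:
  "mat2 a b c d $$ (0,0) = a" "mat2 a b c d $$ (0,1) = b"
  "mat2 a b c d $$ (1,0) = c" "mat2 a b c d $$ (1,1) = d"
  by (simp_all add: mat2_def)

lemma mat2_eq_iff: "mat2 a b c d = mat2 a' b' c' d' \<longleftrightarrow> a = a' \<and> b = b' \<and> c = c' \<and> d = d'"
  by (metis mat2_index)

lemma mat2_eta: "M \<in> carrier_mat 2 2 \<Longrightarrow> M = mat2 (M $$ (0,0)) (M $$ (0,1)) (M $$ (1,0)) (M $$ (1,1))"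
  by (rule eq_matI) (auto simp: mat2_def less_2_cases)

lemma mat2_cases:
  assumes "M \<in> carrier_mat 2 2"
  obtains a b c d where "M = mat2 a b c d"
  using mat2_eta[OF assms] by blast

lemma mat2_mult: "mat2 a b c d * mat2 e f g h = mat2 (a*e+b*g) (a*f+b*h) (c*e+d*g) (c*f+d*h)"
  by (rule eq_matI) (auto simp: mat2_def less_2_cases scalar_prod_def row_def col_def numeral_2_eq_2)

lemma mat2_add: "mat2 a b c d + mat2 e f g h = mat2 (a+e) (b+f) (c+g) (d+h)"
  by (rule eq_matI) (auto simp: mat2_def less_2_cases)

lemma mat2_diff: "mat2 a b c d - mat2 e f g h = mat2 (a-e) (b-f) (c-g) (d-h)"
  by (rule eq_matI) (auto simp: mat2_def less_2_cases)

lemma zero_mat2: "0\<^sub>m 2 2 = mat2 0 0 0 0"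
  by (rule eq_matI) (auto simp: mat2_def less_2_cases)

lemma cvec2_index [simp]: "cvec2 a b $ 0 = a" "cvec2 a b $ 1 = b" "dim_vec (cvec2 a b) = 2"
  by (simp_all add: cvec2_def)

lemma cvec2_carrier [simp]: "cvec2 a b \<in> carrier_vec 2"
  by (simp add: cvec2_def)

lemma cvec2_eq_iff: "cvec2 a b = cvec2 a' b' \<longleftrightarrow> a = a' \<and> b = b'"
  by (metis cvec2_index)

lemma zero_cvec2: "0\<^sub>v 2 = cvec2 0 0"
  by (rule eq_vecI) (auto simp: cvec2_def less_2_cases)

lemma cvec2_add: "cvec2 a b + cvec2 c d = cvec2 (a+c) (b+d)"
  by (rule eq_vecI) (auto simp: cvec2_def less_2_cases)

lemma mat2_mult_cvec2: "mat2 a b c d *\<^sub>v cvec2 x y = cvec2 (a*x+b*y) (c*x+d*y)"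
  by (rule eq_vecI) (auto simp: mat2_def cvec2_def less_2_cases scalar_prod_def row_def numeral_2_eq_2)

lemma mdx_carrier [simp]: "mdx M x t \<in> carrier_mat 2 2"
  by (simp add: mdx_def)

lemma mdt_carrier [simp]: "mdt M x t \<in> carrier_mat 2 2"
  by (simp add: mdt_def)

lemma mdx_mat2: "mdx (\<lambda>x t. mat2 (f11 x t) (f12 x t) (f21 x t) (f22 x t)) x t
    = mat2 (pdx f11 x t) (pdx f12 x t) (pdx f21 x t) (pdx f22 x t)"
  unfolding mdx_def by (rule eq_matI) (auto simp: mat2_def less_2_cases)

lemma mdt_mat2: "mdt (\<lambda>x t. mat2 (f11 x t) (f12 x t) (f21 x t) (f22 x t)) x t
    = mat2 (pdt f11 x t) (pdt f12 x t) (pdt f21 x t) (pdt f22 x t)"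
  unfolding mdt_def by (rule eq_matI) (auto simp: mat2_def less_2_cases)

definition smooth_mat2 :: "(real \<Rightarrow> real \<Rightarrow> complex mat) \<Rightarrow> bool" where
  "smooth_mat2 M \<longleftrightarrow> (\<exists>f11 f12 f21 f22. smooth2 f11 \<and> smooth2 f12 \<and> smooth2 f21 \<and> smooth2 f22 \<and>
     M = (\<lambda>x t. mat2 (f11 x t) (f12 x t) (f21 x t) (f22 x t)))"

lemma smooth_mat2I:
  assumes "\<And>x t. M x t = mat2 (f11 x t) (f12 x t) (f21 x t) (f22 x t)"
    and "smooth2 f11" "smooth2 f12" "smooth2 f21" "smooth2 f22"
  shows "smooth_mat2 M"
proof -
  have "M = (\<lambda>x t. mat2 (f11 x t) (f12 x t) (f21 x t) (f22 x t))"
    using assms(1) by (intro ext)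
  then show ?thesis
    using assms(2-5) unfolding smooth_mat2_def by blast
qed

lemma smooth_mat2E:
  assumes "smooth_mat2 M"
  obtains f11 f12 f21 f22 where "smooth2 f11" "smooth2 f12" "smooth2 f21" "smooth2 f22"
    "M = (\<lambda>x t. mat2 (f11 x t) (f12 x t) (f21 x t) (f22 x t))"
  using assms unfolding smooth_mat2_def by blast

lemma smooth_mat2_mult: "smooth_mat2 A \<Longrightarrow> smooth_mat2 B \<Longrightarrow> smooth_mat2 (\<lambda>x t. A x t * B x t)"
  by (elim smooth_mat2E, rule smooth_mat2I) (simp add: mat2_mult, simp_all)

lemma mdx_mult: "smooth_mat2 A \<Longrightarrow> smooth_mat2 B \<Longrightarrow>
    mdx (\<lambda>x t. A x t * B x t) x t = mdx A x t * B x t + A x t * mdx B x t"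
  by (elim smooth_mat2E) (simp add: mat2_mult mdx_mat2 mat2_add algebra_simps)

lemma mdt_mult: "smooth_mat2 A \<Longrightarrow> smooth_mat2 B \<Longrightarrow>
    mdt (\<lambda>x t. A x t * B x t) x t = mdt A x t * B x t + A x t * mdt B x t"
  by (elim smooth_mat2E) (simp add: mat2_mult mdt_mat2 mat2_add algebra_simps)

lemma mdx_diff: "smooth_mat2 A \<Longrightarrow> smooth_mat2 B \<Longrightarrow> mdx (\<lambda>x t. A x t - B x t) x t = mdx A x t - mdx B x t"
  by (elim smooth_mat2E) (simp add: mat2_diff mdx_mat2)

lemma mdt_diff: "smooth_mat2 A \<Longrightarrow> smooth_mat2 B \<Longrightarrow> mdt (\<lambda>x t. A x t - B x t) x t = mdt A x t - mdt B x t"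
  by (elim smooth_mat2E) (simp add: mat2_diff mdt_mat2)

lemma mdt_mdx_commute: "smooth_mat2 M \<Longrightarrow> mdt (mdx M) x t = mdx (mdt M) x t"
proof (elim smooth_mat2E)
  fix f11 f12 f21 f22
  assume "smooth2 f11" "smooth2 f12" "smooth2 f21" "smooth2 f22"
    and M: "M = (\<lambda>x t. mat2 (f11 x t) (f12 x t) (f21 x t) (f22 x t))"
  moreover have "mdx M = (\<lambda>x t. mat2 (pdx f11 x t) (pdx f12 x t) (pdx f21 x t) (pdx f22 x t))"
    "mdt M = (\<lambda>x t. mat2 (pdt f11 x t) (pdt f12 x t) (pdt f21 x t) (pdt f22 x t))"
    unfolding M by (intro ext mdx_mat2 mdt_mat2)+
  ultimately show ?thesis
    by (simp add: mdx_mat2 mdt_mat2 pdt_pdx_commute)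
qed

lemma defect_mult_vec_eq_zero:
  fixes T dT P P' :: "'a :: comm_ring mat"
  assumes carrier: "T \<in> carrier_mat n n" "dT \<in> carrier_mat n n" "P \<in> carrier_mat n n"
      "P' \<in> carrier_mat n n" "f \<in> carrier_vec n"
    and kernel: "T *\<^sub>v f = 0\<^sub>v n"
    and kernel_deriv: "dT *\<^sub>v f + T *\<^sub>v df = 0\<^sub>v n"
    and deriv: "df = P *\<^sub>v f"
  shows "(dT + T * P - P' * T) *\<^sub>v f = 0\<^sub>v n"
proof -
  have "(dT + T * P - P' * T) *\<^sub>v f = (dT *\<^sub>v f + T *\<^sub>v df) - P' *\<^sub>v (T *\<^sub>v f)"
    using carrier unfolding deriv
    by (simp add: add_mult_distrib_mat_vec[of _ n n] minus_mult_distrib_mat_vec[of _ n n])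
  also have "\<dots> = 0\<^sub>v n"
    using carrier by (auto simp: kernel kernel_deriv)
  finally show ?thesis .
qed

lemma diff_eq_zero_mat_iff:
  fixes A B :: "'a :: ab_group_add mat"
  assumes "A \<in> carrier_mat n m" "B \<in> carrier_mat n m"
  shows "A - B = 0\<^sub>m n m \<longleftrightarrow> A = B"
proof
  assume diff: "A - B = 0\<^sub>m n m"
  show "A = B"
  proof (rule eq_matI)
    fix i j assume ij: "i < dim_row B" "j < dim_col B"
    then have "(A - B) $$ (i,j) = 0" using diff assms by simp
    then show "A $$ (i,j) = B $$ (i,j)" using assms ij by simp
  qed (use assms in auto)
qed (use assms in auto)

lemma eq_diff_mat_if_add_eq:
  fixes A B C :: "'a :: ab_group_add mat"
  assumes "A \<in> carrier_mat n m" "B \<in> carrier_mat n m" "A + B = C"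
  shows "A = C - B"
proof (rule eq_matI)
  fix i j assume ij: "i < dim_row (C - B)" "j < dim_col (C - B)"
  then show "A $$ (i,j) = (C - B) $$ (i,j)"
    using assms unfolding assms(3)[symmetric] by auto
qed (use assms in auto)

lemma mat2_mult_eq_zero_cancel:
  assumes "mat2 z11 z12 z21 z22 * mat2 t11 t12 t21 t22 = mat2 0 0 0 0"
    and "t11 * t22 - t12 * t21 \<noteq> (0::complex)"
  shows "z11 = 0 \<and> z12 = 0 \<and> z21 = 0 \<and> z22 = 0"
proof -
  from assms(1) have h: "z11*t11 + z12*t21 = 0" "z11*t12 + z12*t22 = 0"
      "z21*t11 + z22*t21 = 0" "z21*t12 + z22*t22 = 0"
    unfolding mat2_mult mat2_eq_iff by auto
  have "z11 * (t11 * t22 - t12 * t21) = (z11*t11 + z12*t21) * t22 - (z11*t12 + z12*t22) * t21"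
    "z12 * (t11 * t22 - t12 * t21) = (z11*t12 + z12*t22) * t11 - (z11*t11 + z12*t21) * t12"
    "z21 * (t11 * t22 - t12 * t21) = (z21*t11 + z22*t21) * t22 - (z21*t12 + z22*t22) * t21"
    "z22 * (t11 * t22 - t12 * t21) = (z21*t12 + z22*t22) * t11 - (z21*t11 + z22*t21) * t12"
    by (simp_all add: algebra_simps)
  then show ?thesis using h assms(2) by simp
qed

lemma curvature_intertwining:
  fixes P' Q' P Q T P't Q'x Pt Qx Tt Tx :: "complex mat"
  assumes carrier: "P' \<in> carrier_mat 2 2" "Q' \<in> carrier_mat 2 2" "P \<in> carrier_mat 2 2"
      "Q \<in> carrier_mat 2 2" "T \<in> carrier_mat 2 2" "P't \<in> carrier_mat 2 2" "Q'x \<in> carrier_mat 2 2"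
      "Pt \<in> carrier_mat 2 2" "Qx \<in> carrier_mat 2 2"
    and Tx: "Tx = P' * T - T * P" and Tt: "Tt = Q' * T - T * Q"
    and Txt_eq_Ttx: "P't * T + P' * Tt - (Tt * P + T * Pt) = Q'x * T + Q' * Tx - (Tx * Q + T * Qx)"
  shows "(P't - Q'x + (P' * Q' - Q' * P')) * T = T * (Pt - Qx + (P * Q - Q * P))"
proof -
  obtain a11 a12 a21 a22 where a: "P' = mat2 a11 a12 a21 a22" using mat2_cases[OF carrier(1)] .
  obtain b11 b12 b21 b22 where b: "Q' = mat2 b11 b12 b21 b22" using mat2_cases[OF carrier(2)] .
  obtain c11 c12 c21 c22 where c: "P = mat2 c11 c12 c21 c22" using mat2_cases[OF carrier(3)] .
  obtain d11 d12 d21 d22 where d: "Q = mat2 d11 d12 d21 d22" using mat2_cases[OF carrier(4)] .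
  obtain e11 e12 e21 e22 where e: "T = mat2 e11 e12 e21 e22" using mat2_cases[OF carrier(5)] .
  obtain f11 f12 f21 f22 where f: "P't = mat2 f11 f12 f21 f22" using mat2_cases[OF carrier(6)] .
  obtain g11 g12 g21 g22 where g: "Q'x = mat2 g11 g12 g21 g22" using mat2_cases[OF carrier(7)] .
  obtain h11 h12 h21 h22 where h: "Pt = mat2 h11 h12 h21 h22" using mat2_cases[OF carrier(8)] .
  obtain k11 k12 k21 k22 where k: "Qx = mat2 k11 k12 k21 k22" using mat2_cases[OF carrier(9)] .
  have "(P't - Q'x + (P' * Q' - Q' * P')) * T - T * (Pt - Qx + (P * Q - Q * P))
     = (P't * T + P' * Tt - (Tt * P + T * Pt)) - (Q'x * T + Q' * Tx - (Tx * Q + T * Qx))"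
    unfolding Tx Tt a b c d e f g h k mat2_mult mat2_add mat2_diff mat2_eq_iff
    by (intro conjI; Groebner_Basis.algebra)
  also have "\<dots> = 0\<^sub>m 2 2"
    unfolding Txt_eq_Ttx unfolding Tx a b c d e f g h k mat2_mult mat2_add mat2_diff zero_mat2 by simp
  finally show ?thesis
    by (subst (asm) diff_eq_zero_mat_iff[of _ 2 2]) (simp_all add: a b c d e f g h k mat2_mult mat2_add mat2_diff)
qed

lemma pdx_kernel_relation:
  assumes M: "smooth_mat2 M" and f: "smooth2 f1" "smooth2 f2"
    and kernel: "\<And>x t. M x t *\<^sub>v cvec2 (f1 x t) (f2 x t) = 0\<^sub>v 2"
  shows "mdx M x t *\<^sub>v cvec2 (f1 x t) (f2 x t) + M x t *\<^sub>v cvec2 (pdx f1 x t) (pdx f2 x t) = 0\<^sub>v 2"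
  using M
proof (elim smooth_mat2E)
  fix m11 m12 m21 m22
  assume m: "smooth2 m11" "smooth2 m12" "smooth2 m21" "smooth2 m22"
    and M_eq: "M = (\<lambda>x t. mat2 (m11 x t) (m12 x t) (m21 x t) (m22 x t))"
  from kernel have "(\<lambda>x t. m11 x t * f1 x t + m12 x t * f2 x t) = (\<lambda>x t. 0)"
    "(\<lambda>x t. m21 x t * f1 x t + m22 x t * f2 x t) = (\<lambda>x t. 0)"
    unfolding M_eq mat2_mult_cvec2 zero_cvec2 cvec2_eq_iff by auto
  then have "pdx (\<lambda>x t. m11 x t * f1 x t + m12 x t * f2 x t) x t = 0"
    "pdx (\<lambda>x t. m21 x t * f1 x t + m22 x t * f2 x t) x t = 0"
    by simp_all
  then show ?thesis
    using m f unfolding M_eq mdx_mat2 mat2_mult_cvec2 cvec2_add zero_cvec2 cvec2_eq_iff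
    by (simp add: algebra_simps)
qed

lemma pdt_kernel_relation:
  assumes M: "smooth_mat2 M" and f: "smooth2 f1" "smooth2 f2"
    and kernel: "\<And>x t. M x t *\<^sub>v cvec2 (f1 x t) (f2 x t) = 0\<^sub>v 2"
  shows "mdt M x t *\<^sub>v cvec2 (f1 x t) (f2 x t) + M x t *\<^sub>v cvec2 (pdt f1 x t) (pdt f2 x t) = 0\<^sub>v 2"
  using M
proof (elim smooth_mat2E)
  fix m11 m12 m21 m22
  assume m: "smooth2 m11" "smooth2 m12" "smooth2 m21" "smooth2 m22"
    and M_eq: "M = (\<lambda>x t. mat2 (m11 x t) (m12 x t) (m21 x t) (m22 x t))"
  from kernel have "(\<lambda>x t. m11 x t * f1 x t + m12 x t * f2 x t) = (\<lambda>x t. 0)"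
    "(\<lambda>x t. m21 x t * f1 x t + m22 x t * f2 x t) = (\<lambda>x t. 0)"
    unfolding M_eq mat2_mult_cvec2 zero_cvec2 cvec2_eq_iff by auto
  then have "pdt (\<lambda>x t. m11 x t * f1 x t + m12 x t * f2 x t) x t = 0"
    "pdt (\<lambda>x t. m21 x t * f1 x t + m22 x t * f2 x t) x t = 0"
    by simp_all
  then show ?thesis
    using m f unfolding M_eq mdt_mat2 mat2_mult_cvec2 cvec2_add zero_cvec2 cvec2_eq_iff
    by (simp add: algebra_simps)
qed

section \<open>The linear systems with matrices \<open>B\<^sub>1\<^sub>2\<close> and \<open>B\<^sub>2\<^sub>2\<close>\<close>

text \<open>
  Coefficient sequences \<open>u, v\<close> of length \<open>N\<close> are stored as the vector
  \<open>(u\<^sub>N\<^sub>-\<^sub>1, v\<^sub>N\<^sub>-\<^sub>1, \<dots>, u\<^sub>0, v\<^sub>0)\<close>, matching the column order of \<open>B\<^sub>1\<^sub>2\<close> and \<open>B\<^sub>2\<^sub>2\<close>.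
\<close>

definition interleave :: "nat \<Rightarrow> (nat \<Rightarrow> 'a) \<Rightarrow> (nat \<Rightarrow> 'a) \<Rightarrow> 'a vec" where
  "interleave N u v = vec (2*N) (\<lambda>c. if even c then u (N - Suc (c div 2)) else v (N - Suc (c div 2)))"

lemma interleave_carrier [simp]: "interleave N u v \<in> carrier_vec (2*N)"
  by (simp add: interleave_def)

lemma interleave_index:
  assumes "j < N"
  shows "interleave N u v $ (2*(N - Suc j)) = u j" "interleave N u v $ (2*(N - Suc j) + 1) = v j"
  using assms by (simp_all add: interleave_def)

lemma sum_lessThan_double: "(\<Sum>c<2*(N::nat). f c) = (\<Sum>i<N. f (2*i) + f (2*i+1))"
  by (induction N) (simp_all add: sum.distrib algebra_simps)

lemma mult_interleave_index:
  fixes M :: "'a :: comm_semiring_0 mat"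
  assumes M: "M \<in> carrier_mat (2*N) (2*N)" and k: "k < 2*N"
    and even_col: "\<And>i. i < N \<Longrightarrow> M $$ (k, 2*i) = f (N - Suc i)"
    and odd_col: "\<And>i. i < N \<Longrightarrow> M $$ (k, 2*i+1) = g (N - Suc i)"
  shows "(M *\<^sub>v interleave N u v) $ k = (\<Sum>j<N. u j * f j + v j * g j)"
proof -
  have "(M *\<^sub>v interleave N u v) $ k = (\<Sum>c<2*N. M $$ (k,c) * interleave N u v $ c)"
    using M k by (simp add: scalar_prod_def row_def atLeast0LessThan interleave_def)
  also have "\<dots> = (\<Sum>i<N. M $$ (k,2*i) * interleave N u v $ (2*i)
      + M $$ (k,2*i+1) * interleave N u v $ (2*i+1))"
    by (rule sum_lessThan_double)
  also have "\<dots> = (\<Sum>i<N. u (N - Suc i) * f (N - Suc i) + v (N - Suc i) * g (N - Suc i))"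
  proof (rule sum.cong)
    fix i assume "i \<in> {..<N}"
    then have "i < N" by simp
    then show "M $$ (k,2*i) * interleave N u v $ (2*i) + M $$ (k,2*i+1) * interleave N u v $ (2*i+1)
        = u (N - Suc i) * f (N - Suc i) + v (N - Suc i) * g (N - Suc i)"
      by (simp only: even_col odd_col) (simp add: interleave_def mult.commute)
  qed simp
  also have "\<dots> = (\<Sum>j<N. u j * f j + v j * g j)"
    by (rule sum.nat_diff_reindex)
  finally show ?thesis .
qed

lemma interleave_eq_zero:
  fixes M :: "'a :: idom mat"
  assumes M: "M \<in> carrier_mat (2*N) (2*N)" and det: "det M \<noteq> 0"
    and kernel: "M *\<^sub>v interleave N u v = 0\<^sub>v (2*N)" and j: "j < N"
  shows "u j = 0" "v j = 0"
proof -
  have "interleave N u v = 0\<^sub>v (2*N)"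
    using det kernel det_0_iff_vec_prod_zero[OF M] interleave_carrier by blast
  moreover have "2*(N - Suc j) < 2*N" "2*(N - Suc j) + 1 < 2*N"
    using j by auto
  ultimately show "u j = 0" "v j = 0"
    using interleave_index[OF j, of u v] by (metis index_zero_vec(1))+
qed

lemma interleave_cramer:
  fixes M :: "'a :: field mat"
  assumes M: "M \<in> carrier_mat (2*N) (2*N)" and det: "det M \<noteq> 0"
    and system: "M *\<^sub>v interleave N u v = b" and c: "c < 2*N"
  shows "interleave N u v $ c = det (replace_col M b c) / det M"
proof -
  have "det (replace_col M b c) = interleave N u v $ c * det M"
    using cramer_lemma_mat[OF M interleave_carrier c, of u v] system by simp
  then show ?thesis using det by simp
qed

lemma matB12_carrier [simp]: "matB12 N lam p1 p2 \<in> carrier_mat (2*N) (2*N)"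
  by (simp add: matB12_def)

lemma matB22_carrier [simp]: "matB22 N lam p1 p2 \<in> carrier_mat (2*N) (2*N)"
  by (simp add: matB22_def)

lemma matB12_mult_interleave:
  assumes "k < 2*N"
  shows "(matB12 N lam p1 p2 *\<^sub>v interleave N u v) $ k
    = (\<Sum>j<N. u j * lam k ^ (2*j) * p1 k + v j * lam k ^ (2*j+1) * p2 k)"
proof -
  have "2*N - 2 - 2*i = 2*(N - Suc i)" "2*N - (2*i+1) = 2*(N - Suc i) + 1" if "i < N" for i
    using that by auto
  then show ?thesis
    using assms by (subst mult_interleave_index[where f="\<lambda>j. lam k ^ (2*j) * p1 k"
        and g="\<lambda>j. lam k ^ (2*j+1) * p2 k"]) (simp_all add: matB12_def mult.assoc)
qed

lemma matB22_mult_interleave: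
  assumes "k < 2*N"
  shows "(matB22 N lam p1 p2 *\<^sub>v interleave N u v) $ k
    = (\<Sum>j<N. u j * lam k ^ (2*j+1) * p1 k + v j * lam k ^ (2*j) * p2 k)"
proof -
  have "2*N - 1 - 2*i = 2*(N - Suc i) + 1" "2*N - 1 - (2*i+1) = 2*(N - Suc i)" if "i < N" for i
    using that by auto
  then show ?thesis
    using assms by (subst mult_interleave_index[where f="\<lambda>j. lam k ^ (2*j+1) * p1 k"
        and g="\<lambda>j. lam k ^ (2*j) * p2 k"]) (simp_all add: matB22_def mult.assoc)
qed

lemma matB12_system:
  assumes "\<And>k. k < 2*N \<Longrightarrow> (\<Sum>j<N. u j * lam k ^ (2*j) * p1 k + v j * lam k ^ (2*j+1) * p2 k) = b k"
  shows "matB12 N lam p1 p2 *\<^sub>v interleave N u v = vec (2*N) b"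
proof (rule eq_vecI)
  fix k assume "k < dim_vec (vec (2*N) b)"
  then have k: "k < 2*N" by simp
  show "(matB12 N lam p1 p2 *\<^sub>v interleave N u v) $ k = vec (2*N) b $ k"
    by (simp only: matB12_mult_interleave[OF k] assms[OF k] index_vec[OF k])
qed (simp add: matB12_def)

lemma matB22_system:
  assumes "\<And>k. k < 2*N \<Longrightarrow> (\<Sum>j<N. u j * lam k ^ (2*j+1) * p1 k + v j * lam k ^ (2*j) * p2 k) = b k"
  shows "matB22 N lam p1 p2 *\<^sub>v interleave N u v = vec (2*N) b"
proof (rule eq_vecI)
  fix k assume "k < dim_vec (vec (2*N) b)"
  then have k: "k < 2*N" by simp
  show "(matB22 N lam p1 p2 *\<^sub>v interleave N u v) $ k = vec (2*N) b $ k"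
    by (simp only: matB22_mult_interleave[OF k] assms[OF k] index_vec[OF k])
qed (simp add: matB22_def)

lemma matB11_replace_col:
  "matB11 N lam p1 p2 = replace_col (matB12 N lam p1 p2) (vec (2*N) (\<lambda>k. - (lam k ^ (2*N) * p1 k))) 1"
  by (rule eq_matI) (auto simp: matB11_def matB12_def replace_col_def)

lemma matB21_replace_col:
  "matB21 N lam p1 p2 = replace_col (matB22 N lam p1 p2) (vec (2*N) (\<lambda>k. - (lam k ^ (2*N) * p2 k))) 0"
  by (rule eq_matI) (auto simp: matB21_def matB22_def replace_col_def)

section \<open>Polynomials in \<open>\<lambda>\<^sup>2\<close>\<close>

text \<open>
  \<open>ext_coeff N A c\<close> extends the coefficient sequence \<open>A\<^sub>0, \<dots>, A\<^sub>N\<^sub>-\<^sub>1\<close> by the constant leading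
  coefficient \<open>c\<close> at index \<open>N\<close> (\<open>c = 1\<close> on the diagonal of \<open>T\<close>, \<open>c = 0\<close> off it) and by zeros.
\<close>

definition ext_coeff ::
    "nat \<Rightarrow> (nat \<Rightarrow> real \<Rightarrow> real \<Rightarrow> complex) \<Rightarrow> complex \<Rightarrow> nat \<Rightarrow> real \<Rightarrow> real \<Rightarrow> complex" where
  "ext_coeff N A c n = (\<lambda>x t. if n < N then A n x t else if n = N then c else 0)"

definition coeff_poly ::
    "nat \<Rightarrow> (nat \<Rightarrow> real \<Rightarrow> real \<Rightarrow> complex) \<Rightarrow> complex \<Rightarrow> real \<Rightarrow> real \<Rightarrow> complex poly" where
  "coeff_poly N A c x t = (\<Sum>n<Suc N. monom (ext_coeff N A c n x t) n)"

lemma ext_coeff_apply: "ext_coeff N A c n x t = (if n < N then A n x t else if n = N then c else 0)"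
  by (simp add: ext_coeff_def)

lemma ext_coeff_cases:
  "ext_coeff N A c n = (if n < N then A n else if n = N then (\<lambda>x t. c) else (\<lambda>x t. 0))"
  by (auto simp: ext_coeff_def)

lemma smooth2_ext_coeff: "(\<And>j. j < N \<Longrightarrow> smooth2 (A j)) \<Longrightarrow> smooth2 (ext_coeff N A c n)"
  by (simp add: ext_coeff_cases)

lemma pdx_ext_coeff:
  "(\<And>j. j < N \<Longrightarrow> smooth2 (A j)) \<Longrightarrow> pdx (ext_coeff N A c n) = ext_coeff N (\<lambda>j. pdx (A j)) 0 n"
  by (simp add: ext_coeff_cases)

lemma coeff_coeff_poly [simp]: "coeff (coeff_poly N A c x t) n = ext_coeff N A c n x t"
proof -
  have "coeff (coeff_poly N A c x t) n = (\<Sum>m<Suc N. if m = n then ext_coeff N A c m x t else 0)"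
    by (simp add: coeff_poly_def coeff_sum)
  also have "\<dots> = ext_coeff N A c n x t"
    by (simp add: sum.delta' ext_coeff_apply)
  finally show ?thesis .
qed

lemma poly_coeff_poly: "poly (coeff_poly N A c x t) z = c * z ^ N + (\<Sum>j<N. A j x t * z ^ j)"
  by (simp add: coeff_poly_def poly_sum poly_monom ext_coeff_apply)

lemma diagonal_entry_as_poly: "lm^(2*N) + (\<Sum>j<N. A j x t * lm^(2*j)) = poly (coeff_poly N A 1 x t) (lm^2)"
  by (simp add: poly_coeff_poly power_mult)

lemma even_sum_as_poly: "(\<Sum>j<N. A j x t * lm^(2*j)) = poly (coeff_poly N A 0 x t) (lm^2)"
  by (simp add: poly_coeff_poly power_mult)

lemma odd_sum_as_poly: "(\<Sum>j<N. A j x t * lm^(2*j+1)) = lm * poly (coeff_poly N A 0 x t) (lm^2)"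
  by (simp add: poly_coeff_poly sum_distrib_left power_mult[symmetric] ac_simps)

lemma poly_eq_sum_lessThan:
  fixes p :: "'a :: comm_semiring_1 poly"
  assumes "\<And>n. K \<le> n \<Longrightarrow> coeff p n = 0"
  shows "poly p z = (\<Sum>n<K. coeff p n * z ^ n)"
proof -
  have "poly p z = (\<Sum>i\<le>degree p. coeff p i * z ^ i)"
    by (rule poly_altdef)
  also have "\<dots> = (\<Sum>i<Suc (max K (degree p)). coeff p i * z ^ i)"
    by (rule sum.mono_neutral_left) (auto simp: coeff_eq_0)
  also have "\<dots> = (\<Sum>n<K. coeff p n * z ^ n)"
    by (rule sum.mono_neutral_right) (auto simp: assms)
  finally show ?thesis .
qed

lemma poly_eq_sum_shift3:
  fixes p :: "'a :: comm_semiring_1 poly"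
  assumes "\<And>n. n < 3 \<Longrightarrow> coeff p n = 0" and "\<And>n. N + 3 \<le> n \<Longrightarrow> coeff p n = 0"
  shows "poly p z = (\<Sum>j<N. coeff p (j+3) * z ^ (j+3))"
proof -
  have split: "(\<Sum>n<N+3. f n) = (\<Sum>n<3. f n) + (\<Sum>j<N. f (j+3))" for f :: "nat \<Rightarrow> 'a"
    by (induction N) (simp_all add: numeral_3_eq_3 add.assoc)
  have "poly p z = (\<Sum>n<N+3. coeff p n * z ^ n)"
    by (rule poly_eq_sum_lessThan) (use assms(2) in auto)
  also have "\<dots> = (\<Sum>j<N. coeff p (j+3) * z ^ (j+3))"
    unfolding split using assms(1) by simp
  finally show ?thesis .
qed

lemma poly_pair_eq_sum_odd_even:
  fixes p p' :: "'a :: comm_semiring_1 poly"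
  assumes "\<And>n. N \<le> n \<Longrightarrow> coeff p n = 0" "\<And>n. N \<le> n \<Longrightarrow> coeff p' n = 0"
  shows "lm * poly p (lm^2) * f1 + poly p' (lm^2) * f2
       = (\<Sum>n<N. coeff p n * lm^(2*n+1) * f1 + coeff p' n * lm^(2*n) * f2)"
  by (simp add: poly_eq_sum_lessThan[OF assms(1)] poly_eq_sum_lessThan[OF assms(2)] sum.distrib
      sum_distrib_left sum_distrib_right power_mult[symmetric] ac_simps)

lemma poly_pair_eq_sum_even_odd:
  fixes p p' :: "'a :: comm_semiring_1 poly"
  assumes "\<And>n. N \<le> n \<Longrightarrow> coeff p n = 0" "\<And>n. N \<le> n \<Longrightarrow> coeff p' n = 0"
  shows "poly p (lm^2) * f1 + lm * poly p' (lm^2) * f2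
       = (\<Sum>n<N. coeff p n * lm^(2*n) * f1 + coeff p' n * lm^(2*n+1) * f2)"
  by (simp add: poly_eq_sum_lessThan[OF assms(1)] poly_eq_sum_lessThan[OF assms(2)] sum.distrib
      sum_distrib_left sum_distrib_right power_mult[symmetric] ac_simps)

lemma inverse_power_mult_power_shift3:
  assumes "(lm::'a::field) \<noteq> 0"
  shows "inverse lm ^ 6 * (lm^2)^(j+3) = lm^(2*j)" "inverse lm ^ 5 * (lm^2)^(j+3) = lm^(2*j+1)"
proof -
  have "2*(j+3) = 2*j+1+5" by simp
  then have "(lm^2)^(j+3) = lm^(2*j) * lm^6" "(lm^2)^(j+3) = lm^(2*j+1) * lm^5"
    by (simp_all only: power_mult[symmetric] power_add[symmetric]) (simp add: add.commute)
  then show "inverse lm ^ 6 * (lm^2)^(j+3) = lm^(2*j)" "inverse lm ^ 5 * (lm^2)^(j+3) = lm^(2*j+1)"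
    using assms by (simp_all add: field_simps)
qed

lemma poly_pair_shift3_eq_sum_even_odd:
  fixes p p' :: "'a :: field poly"
  assumes lm: "lm \<noteq> 0"
    and "\<And>n. n < 3 \<Longrightarrow> coeff p n = 0" "\<And>n. N + 3 \<le> n \<Longrightarrow> coeff p n = 0"
    and "\<And>n. n < 3 \<Longrightarrow> coeff p' n = 0" "\<And>n. N + 3 \<le> n \<Longrightarrow> coeff p' n = 0"
  shows "inverse lm ^ 6 * poly p (lm^2) * f1 + inverse lm ^ 5 * poly p' (lm^2) * f2
       = (\<Sum>j<N. coeff p (j+3) * lm^(2*j) * f1 + coeff p' (j+3) * lm^(2*j+1) * f2)"
proof -
  have "inverse lm ^ 6 * poly p (lm^2) * f1 + inverse lm ^ 5 * poly p' (lm^2) * f2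
     = (\<Sum>j<N. coeff p (j+3) * (inverse lm ^ 6 * (lm^2)^(j+3)) * f1
              + coeff p' (j+3) * (inverse lm ^ 5 * (lm^2)^(j+3)) * f2)"
    by (simp add: poly_eq_sum_shift3[OF assms(2,3)] poly_eq_sum_shift3[OF assms(4,5)]
        sum.distrib sum_distrib_left sum_distrib_right algebra_simps)
  then show ?thesis
    by (simp only: inverse_power_mult_power_shift3[OF lm])
qed

lemma poly_pair_shift3_eq_sum_odd_even:
  fixes p p' :: "'a :: field poly"
  assumes lm: "lm \<noteq> 0"
    and "\<And>n. n < 3 \<Longrightarrow> coeff p n = 0" "\<And>n. N + 3 \<le> n \<Longrightarrow> coeff p n = 0"
    and "\<And>n. n < 3 \<Longrightarrow> coeff p' n = 0" "\<And>n. N + 3 \<le> n \<Longrightarrow> coeff p' n = 0"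
  shows "inverse lm ^ 5 * poly p (lm^2) * f1 + inverse lm ^ 6 * poly p' (lm^2) * f2
       = (\<Sum>j<N. coeff p (j+3) * lm^(2*j+1) * f1 + coeff p' (j+3) * lm^(2*j) * f2)"
proof -
  have "inverse lm ^ 5 * poly p (lm^2) * f1 + inverse lm ^ 6 * poly p' (lm^2) * f2
     = (\<Sum>j<N. coeff p (j+3) * (inverse lm ^ 5 * (lm^2)^(j+3)) * f1
              + coeff p' (j+3) * (inverse lm ^ 6 * (lm^2)^(j+3)) * f2)"
    by (simp add: poly_eq_sum_shift3[OF assms(2,3)] poly_eq_sum_shift3[OF assms(4,5)]
        sum.distrib sum_distrib_left sum_distrib_right algebra_simps)
  then show ?thesis
    by (simp only: inverse_power_mult_power_shift3[OF lm])
qed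

section \<open>The Lax matrices as Laurent polynomials in \<open>\<lambda>\<close>\<close>

lemma power_int_minus_complex: "(lm::complex) powi (- int n) = inverse lm ^ n"
  by (simp add: power_int_minus power_inverse)

lemma power_int_neg_numerals:
  "(lm::complex) powi (-1) = inverse lm" "lm powi (-2) = inverse lm ^ 2" "lm powi (-3) = inverse lm ^ 3"
  "lm powi (-4) = inverse lm ^ 4" "lm powi (-5) = inverse lm ^ 5" "lm powi (-6) = inverse lm ^ 6"
  using power_int_minus_complex[of lm 1] power_int_minus_complex[of lm 2] power_int_minus_complex[of lm 3]
    power_int_minus_complex[of lm 4] power_int_minus_complex[of lm 5] power_int_minus_complex[of lm 6]
  by simp_all

lemma LaxP_mat2: "LaxP \<rho> q r lm x t = mat2 (- \<i> * inverse lm ^ 2 + \<i> * of_real \<rho>) (q x t * inverse lm)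
    (r x t * inverse lm) (\<i> * inverse lm ^ 2 - \<i> * of_real \<rho>)"
  by (simp add: LaxP_def power_int_neg_numerals)

lemma LaxP_carrier [simp]: "LaxP \<rho> q r lm x t \<in> carrier_mat 2 2"
  by (simp add: LaxP_def)

lemma LaxQ_carrier [simp]: "LaxQ \<rho> q r lm x t \<in> carrier_mat 2 2"
  by (simp add: LaxQ_def)

definition lax_Q1_poly ::
    "real \<Rightarrow> (real \<Rightarrow> real \<Rightarrow> complex) \<Rightarrow> (real \<Rightarrow> real \<Rightarrow> complex) \<Rightarrow> real \<Rightarrow> real \<Rightarrow> complex poly" where
  "lax_Q1_poly \<rho> q r x t = [: - 4 * \<i>, 8 * \<i> * of_real \<rho> - 2 * \<i> * q x t * r x t,
     - (3 * \<i> / 2) * q x t ^ 2 * r x t ^ 2 - pdx r x t * q x t + pdx q x t * r x t,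
     - 4 * \<i> * of_real \<rho> ^ 2 :]"

definition lax_Q2_poly ::
    "real \<Rightarrow> (real \<Rightarrow> real \<Rightarrow> complex) \<Rightarrow> (real \<Rightarrow> real \<Rightarrow> complex) \<Rightarrow> real \<Rightarrow> real \<Rightarrow> complex poly" where
  "lax_Q2_poly \<rho> q r x t = [: 4 * q x t, 2 * \<i> * pdx q x t + 2 * q x t ^ 2 * r x t - 4 * q x t * of_real \<rho>,
     - pdx (pdx q) x t + 3 * \<i> * pdx q x t * q x t * r x t + (3/2) * q x t ^ 3 * r x t ^ 2
     + 2 * q x t ^ 2 * r x t * of_real \<rho> - 4 * q x t * of_real \<rho> ^ 2 :]"

definition lax_Q3_poly ::
    "real \<Rightarrow> (real \<Rightarrow> real \<Rightarrow> complex) \<Rightarrow> (real \<Rightarrow> real \<Rightarrow> complex) \<Rightarrow> real \<Rightarrow> real \<Rightarrow> complex poly" where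
  "lax_Q3_poly \<rho> q r x t = [: 4 * r x t, - 2 * \<i> * pdx r x t + 2 * q x t * r x t ^ 2 - 4 * r x t * of_real \<rho>,
     - pdx (pdx r) x t - 3 * \<i> * pdx r x t * q x t * r x t + (3/2) * q x t ^ 2 * r x t ^ 3
     + 2 * q x t * r x t ^ 2 * of_real \<rho> - 4 * r x t * of_real \<rho> ^ 2 :]"

lemma LaxQ1_eq_poly: "lm \<noteq> 0 \<Longrightarrow> LaxQ1 \<rho> q r lm x t = inverse lm ^ 6 * poly (lax_Q1_poly \<rho> q r x t) (lm^2)"
  by (simp add: LaxQ1_def lax_Q1_poly_def Let_def power_int_neg_numerals field_simps;
      (Groebner_Basis.algebra)?)

lemma LaxQ2_eq_poly: "lm \<noteq> 0 \<Longrightarrow> LaxQ2 \<rho> q r lm x t = inverse lm ^ 5 * poly (lax_Q2_poly \<rho> q r x t) (lm^2)"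
  by (simp add: LaxQ2_def lax_Q2_poly_def Let_def power_int_neg_numerals field_simps;
      (Groebner_Basis.algebra)?)

lemma LaxQ3_eq_poly: "lm \<noteq> 0 \<Longrightarrow> LaxQ3 \<rho> q r lm x t = inverse lm ^ 5 * poly (lax_Q3_poly \<rho> q r x t) (lm^2)"
  by (simp add: LaxQ3_def lax_Q3_poly_def Let_def power_int_neg_numerals field_simps;
      (Groebner_Basis.algebra)?)

lemma LaxQ_entries_fun:
  "LaxQ1 \<rho> q r lm = (\<lambda>x t. - (3 * \<i> / 2) * q x t ^ 2 * r x t ^ 2 * lm powi (-2) - 4 * \<i> * of_real \<rho> ^ 2
       - pdx r x t * q x t * lm powi (-2) + pdx q x t * r x t * lm powi (-2)
       - 2 * \<i> * q x t * r x t * lm powi (-4) + 8 * \<i> * of_real \<rho> * lm powi (-4) - 4 * \<i> * lm powi (-6))"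
  "LaxQ2 \<rho> q r lm = (\<lambda>x t. - pdx (pdx q) x t * lm powi (-1) + 3 * \<i> * pdx q x t * q x t * r x t * lm powi (-1)
       + 2 * \<i> * pdx q x t * lm powi (-3) + (3/2) * q x t ^ 3 * r x t ^ 2 * lm powi (-1)
       + 2 * q x t ^ 2 * r x t * of_real \<rho> * lm powi (-1) + 2 * q x t ^ 2 * r x t * lm powi (-3)
       - 4 * q x t * of_real \<rho> ^ 2 * lm powi (-1) - 4 * q x t * of_real \<rho> * lm powi (-3) + 4 * q x t * lm powi (-5))"
  "LaxQ3 \<rho> q r lm = (\<lambda>x t. - pdx (pdx r) x t * lm powi (-1) - 3 * \<i> * pdx r x t * q x t * r x t * lm powi (-1)
       - 2 * \<i> * pdx r x t * lm powi (-3) + (3/2) * q x t ^ 2 * r x t ^ 3 * lm powi (-1)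
       + 2 * q x t * r x t ^ 2 * of_real \<rho> * lm powi (-1) + 2 * q x t * r x t ^ 2 * lm powi (-3)
       - 4 * r x t * of_real \<rho> ^ 2 * lm powi (-1) - 4 * r x t * of_real \<rho> * lm powi (-3) + 4 * r x t * lm powi (-5))"
  by (intro ext; simp add: LaxQ1_def LaxQ2_def LaxQ3_def Let_def)+

lemma smooth2_LaxQ_entries:
  assumes "smooth2 q" "smooth2 r"
  shows "smooth2 (LaxQ1 \<rho> q r lm)" "smooth2 (LaxQ2 \<rho> q r lm)" "smooth2 (LaxQ3 \<rho> q r lm)"
  using assms by (simp_all add: LaxQ_entries_fun)

lemma smooth_mat2_LaxP: "smooth2 q \<Longrightarrow> smooth2 r \<Longrightarrow> smooth_mat2 (LaxP \<rho> q r lm)"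
  by (rule smooth_mat2I[OF LaxP_mat2]) simp_all

lemma smooth_mat2_LaxQ: "smooth2 q \<Longrightarrow> smooth2 r \<Longrightarrow> smooth_mat2 (LaxQ \<rho> q r lm)"
  by (rule smooth_mat2I[OF LaxQ_def]) (simp_all add: smooth2_LaxQ_entries)

lemma continuous_LaxQ_entries:
  assumes "smooth2 q" "smooth2 r" "lm0 \<noteq> 0"
  shows "continuous (at lm0) (\<lambda>lm. LaxQ1 \<rho> q r lm x t)" "continuous (at lm0) (\<lambda>lm. LaxQ2 \<rho> q r lm x t)"
    "continuous (at lm0) (\<lambda>lm. LaxQ3 \<rho> q r lm x t)"
    "continuous (at lm0) (\<lambda>lm. pdx (LaxQ1 \<rho> q r lm) x t)"
    "continuous (at lm0) (\<lambda>lm. pdx (LaxQ2 \<rho> q r lm) x t)"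
    "continuous (at lm0) (\<lambda>lm. pdx (LaxQ3 \<rho> q r lm) x t)"
  unfolding LaxQ_entries_fun using assms by (simp_all; intro continuous_intros; simp)+

lemma mdt_LaxP: "smooth2 q \<Longrightarrow> smooth2 r \<Longrightarrow>
    mdt (LaxP \<rho> q r lm) x t = mat2 0 (pdt q x t * inverse lm) (pdt r x t * inverse lm) 0"
proof -
  have "LaxP \<rho> q r lm = (\<lambda>x t. mat2 (- \<i> * inverse lm ^ 2 + \<i> * of_real \<rho>) (q x t * inverse lm)
      (r x t * inverse lm) (\<i> * inverse lm ^ 2 - \<i> * of_real \<rho>))"
    by (intro ext) (rule LaxP_mat2)
  then show "smooth2 q \<Longrightarrow> smooth2 r \<Longrightarrow> ?thesis" by (simp add: mdt_mat2)
qed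

lemma mdx_LaxQ: "smooth2 q \<Longrightarrow> smooth2 r \<Longrightarrow>
    mdx (LaxQ \<rho> q r lm) x t = mat2 (pdx (LaxQ1 \<rho> q r lm) x t) (pdx (LaxQ2 \<rho> q r lm) x t)
      (pdx (LaxQ3 \<rho> q r lm) x t) (- pdx (LaxQ1 \<rho> q r lm) x t)"
proof -
  have "LaxQ \<rho> q r lm = (\<lambda>x t. mat2 (LaxQ1 \<rho> q r lm x t) (LaxQ2 \<rho> q r lm x t)
      (LaxQ3 \<rho> q r lm x t) (- LaxQ1 \<rho> q r lm x t))"
    by (intro ext) (rule LaxQ_def)
  then show "smooth2 q \<Longrightarrow> smooth2 r \<Longrightarrow> ?thesis"
    by (simp add: mdx_mat2 smooth2_LaxQ_entries)
qed

section \<open>The Darboux matrix\<close>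

lemma darbouxT_carrier [simp]: "darbouxT N A1 A2 A3 A4 lm x t \<in> carrier_mat 2 2"
  by (simp add: darbouxT_def)

lemma darbouxT_as_poly: "darbouxT N A1 A2 A3 A4 lm x t = mat2
    (poly (coeff_poly N A1 1 x t) (lm^2)) (lm * poly (coeff_poly N A2 0 x t) (lm^2))
    (lm * poly (coeff_poly N A3 0 x t) (lm^2)) (poly (coeff_poly N A4 1 x t) (lm^2))"
  by (simp only: darbouxT_def diagonal_entry_as_poly odd_sum_as_poly)

locale darboux_data =
  fixes \<rho> :: real and q r :: "real \<Rightarrow> real \<Rightarrow> complex" and N :: nat
    and lam :: "nat \<Rightarrow> complex"
    and phi1 phi2 :: "nat \<Rightarrow> real \<Rightarrow> real \<Rightarrow> complex"
    and A1 A2 A3 A4 :: "nat \<Rightarrow> real \<Rightarrow> real \<Rightarrow> complex"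
  assumes solves: "solves_coupled \<rho> q r"
    and N_pos: "N \<ge> 1"
    and lam_nonzero: "\<forall>k < 2*N. lam k \<noteq> 0"
    and lax_sol: "\<forall>k < 2*N. lax_solution \<rho> q r (lam k) (phi1 k) (phi2 k)"
    and det_B12: "\<forall>x t. det (matB12 N lam (\<lambda>k. phi1 k x t) (\<lambda>k. phi2 k x t)) \<noteq> 0"
    and det_B22: "\<forall>x t. det (matB22 N lam (\<lambda>k. phi1 k x t) (\<lambda>k. phi2 k x t)) \<noteq> 0"
    and kernel: "\<forall>k < 2*N. \<forall>x t.
       darbouxT N A1 A2 A3 A4 (lam k) x t *\<^sub>v cvec2 (phi1 k x t) (phi2 k x t) = 0\<^sub>v 2"
begin

abbreviation B12 :: "real \<Rightarrow> real \<Rightarrow> complex mat" where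
  "B12 x t \<equiv> matB12 N lam (\<lambda>k. phi1 k x t) (\<lambda>k. phi2 k x t)"

abbreviation B22 :: "real \<Rightarrow> real \<Rightarrow> complex mat" where
  "B22 x t \<equiv> matB22 N lam (\<lambda>k. phi1 k x t) (\<lambda>k. phi2 k x t)"

abbreviation T :: "complex \<Rightarrow> real \<Rightarrow> real \<Rightarrow> complex mat" where
  "T \<equiv> darbouxT N A1 A2 A3 A4"

lemma smooth2_q [simp]: "smooth2 q" and smooth2_r [simp]: "smooth2 r"
  using solves by (simp_all add: solves_coupled_def)

lemma lam_nonzeroD: "k < 2*N \<Longrightarrow> lam k \<noteq> 0"
  using lam_nonzero by blast

lemma smooth2_phi: "k < 2*N \<Longrightarrow> smooth2 (phi1 k)" "k < 2*N \<Longrightarrow> smooth2 (phi2 k)"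
  using lax_sol by (simp_all add: lax_solution_def)

lemma kernel_components:
  assumes "k < 2*N"
  shows "(lam k^(2*N) + (\<Sum>j<N. A1 j x t * lam k^(2*j))) * phi1 k x t
           + (\<Sum>j<N. A2 j x t * lam k^(2*j+1)) * phi2 k x t = 0"
    and "(\<Sum>j<N. A3 j x t * lam k^(2*j+1)) * phi1 k x t
           + (lam k^(2*N) + (\<Sum>j<N. A4 j x t * lam k^(2*j))) * phi2 k x t = 0"
  using kernel assms by (auto simp: darbouxT_def mat2_mult_cvec2 zero_cvec2 cvec2_eq_iff)

lemma B12_system: "B12 x t *\<^sub>v interleave N (\<lambda>j. A1 j x t) (\<lambda>j. A2 j x t)
    = vec (2*N) (\<lambda>k. - (lam k ^ (2*N) * phi1 k x t))"
proof (rule matB12_system)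
  fix k assume "k < 2*N"
  have "(\<Sum>j<N. A1 j x t * lam k ^ (2*j) * phi1 k x t + A2 j x t * lam k ^ (2*j+1) * phi2 k x t)
      = (\<Sum>j<N. A1 j x t * lam k^(2*j)) * phi1 k x t
        + (\<Sum>j<N. A2 j x t * lam k^(2*j+1)) * phi2 k x t"
    by (simp add: sum.distrib sum_distrib_right)
  also have "\<dots> = ((lam k^(2*N) + (\<Sum>j<N. A1 j x t * lam k^(2*j))) * phi1 k x t
      + (\<Sum>j<N. A2 j x t * lam k^(2*j+1)) * phi2 k x t) - lam k ^ (2*N) * phi1 k x t"
    by (simp add: algebra_simps)
  also have "\<dots> = - (lam k ^ (2*N) * phi1 k x t)"
    using kernel_components(1)[OF \<open>k < 2*N\<close>, of x t] by simp
  finally show "(\<Sum>j<N. A1 j x t * lam k ^ (2*j) * phi1 k x t + A2 j x t * lam k ^ (2*j+1) * phi2 k x t)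
      = - (lam k ^ (2*N) * phi1 k x t)" .
qed

lemma B22_system: "B22 x t *\<^sub>v interleave N (\<lambda>j. A3 j x t) (\<lambda>j. A4 j x t)
    = vec (2*N) (\<lambda>k. - (lam k ^ (2*N) * phi2 k x t))"
proof (rule matB22_system)
  fix k assume "k < 2*N"
  have "(\<Sum>j<N. A3 j x t * lam k ^ (2*j+1) * phi1 k x t + A4 j x t * lam k ^ (2*j) * phi2 k x t)
      = (\<Sum>j<N. A3 j x t * lam k^(2*j+1)) * phi1 k x t
        + (\<Sum>j<N. A4 j x t * lam k^(2*j)) * phi2 k x t"
    by (simp add: sum.distrib sum_distrib_right)
  also have "\<dots> = ((\<Sum>j<N. A3 j x t * lam k^(2*j+1)) * phi1 k x t
      + (lam k^(2*N) + (\<Sum>j<N. A4 j x t * lam k^(2*j))) * phi2 k x t) - lam k ^ (2*N) * phi2 k x t"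
    by (simp add: algebra_simps)
  also have "\<dots> = - (lam k ^ (2*N) * phi2 k x t)"
    using kernel_components(2)[OF \<open>k < 2*N\<close>, of x t] by simp
  finally show "(\<Sum>j<N. A3 j x t * lam k ^ (2*j+1) * phi1 k x t + A4 j x t * lam k ^ (2*j) * phi2 k x t)
      = - (lam k ^ (2*N) * phi2 k x t)" .
qed

lemma coefA2_eq: "coefA2 N lam phi1 phi2 = A2 (N - 1)"
proof (intro ext)
  fix x t
  have "1 < 2*N" using N_pos by simp
  then have "A2 (N - 1) x t = interleave N (\<lambda>j. A1 j x t) (\<lambda>j. A2 j x t) $ 1"
    by (simp add: interleave_def)
  also have "\<dots> = coefA2 N lam phi1 phi2 x t"
    unfolding coefA2_def matB11_replace_col
    using interleave_cramer[OF matB12_carrier _ B12_system] det_B12 \<open>1 < 2*N\<close> by blast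
  finally show "coefA2 N lam phi1 phi2 x t = A2 (N - 1) x t" ..
qed

lemma coefA3_eq: "coefA3 N lam phi1 phi2 = A3 (N - 1)"
proof (intro ext)
  fix x t
  have "0 < 2*N" using N_pos by simp
  then have "A3 (N - 1) x t = interleave N (\<lambda>j. A3 j x t) (\<lambda>j. A4 j x t) $ 0"
    by (simp add: interleave_def)
  also have "\<dots> = coefA3 N lam phi1 phi2 x t"
    unfolding coefA3_def matB21_replace_col
    using interleave_cramer[OF matB22_carrier _ B22_system] det_B22 \<open>0 < 2*N\<close> by blast
  finally show "coefA3 N lam phi1 phi2 x t = A3 (N - 1) x t" ..
qed

lemma smooth2_cramer_quotients:
  assumes "c < 2*N"
  shows "smooth2 (\<lambda>x t. det (replace_col (B12 x t) (vec (2*N) (\<lambda>k. - (lam k ^ (2*N) * phi1 k x t))) c)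
      / det (B12 x t))"
    and "smooth2 (\<lambda>x t. det (replace_col (B22 x t) (vec (2*N) (\<lambda>k. - (lam k ^ (2*N) * phi2 k x t))) c)
      / det (B22 x t))"
proof -
  have entries: "smooth2 (\<lambda>x t. B12 x t $$ (i, j))" "smooth2 (\<lambda>x t. B22 x t $$ (i, j))"
    "smooth2 (\<lambda>x t. replace_col (B12 x t) (vec (2*N) (\<lambda>k. - (lam k ^ (2*N) * phi1 k x t))) c $$ (i, j))"
    "smooth2 (\<lambda>x t. replace_col (B22 x t) (vec (2*N) (\<lambda>k. - (lam k ^ (2*N) * phi2 k x t))) c $$ (i, j))"
    if "i < 2*N" "j < 2*N" for i j
    using that smooth2_phi[OF that(1)]
    by (simp_all add: matB12_def matB22_def replace_col_def smooth2_if)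
  show "smooth2 (\<lambda>x t. det (replace_col (B12 x t) (vec (2*N) (\<lambda>k. - (lam k ^ (2*N) * phi1 k x t))) c)
      / det (B12 x t))"
    using det_B12 by (intro smooth2_divide smooth2_det[where n="2*N"] entries)
      (simp_all add: replace_col_def matB12_def)
  show "smooth2 (\<lambda>x t. det (replace_col (B22 x t) (vec (2*N) (\<lambda>k. - (lam k ^ (2*N) * phi2 k x t))) c)
      / det (B22 x t))"
    using det_B22 by (intro smooth2_divide smooth2_det[where n="2*N"] entries)
      (simp_all add: replace_col_def matB22_def)
qed

lemma smooth2_coefficients [simp]:
  assumes j: "j < N"
  shows "smooth2 (A1 j)" "smooth2 (A2 j)" "smooth2 (A3 j)" "smooth2 (A4 j)"
proof -
  have c: "2*(N - Suc j) < 2*N" "2*(N - Suc j) + 1 < 2*N"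
    using j by auto
  have cramer12: "interleave N (\<lambda>j. A1 j x t) (\<lambda>j. A2 j x t) $ c
      = det (replace_col (B12 x t) (vec (2*N) (\<lambda>k. - (lam k ^ (2*N) * phi1 k x t))) c) / det (B12 x t)"
    if "c < 2*N" for c x t
    using interleave_cramer[OF matB12_carrier _ B12_system that] det_B12 by blast
  have cramer22: "interleave N (\<lambda>j. A3 j x t) (\<lambda>j. A4 j x t) $ c
      = det (replace_col (B22 x t) (vec (2*N) (\<lambda>k. - (lam k ^ (2*N) * phi2 k x t))) c) / det (B22 x t)"
    if "c < 2*N" for c x t
    using interleave_cramer[OF matB22_carrier _ B22_system that] det_B22 by blast
  have "A1 j = (\<lambda>x t. interleave N (\<lambda>j. A1 j x t) (\<lambda>j. A2 j x t) $ (2*(N - Suc j)))"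
    "A2 j = (\<lambda>x t. interleave N (\<lambda>j. A1 j x t) (\<lambda>j. A2 j x t) $ (2*(N - Suc j) + 1))"
    "A3 j = (\<lambda>x t. interleave N (\<lambda>j. A3 j x t) (\<lambda>j. A4 j x t) $ (2*(N - Suc j)))"
    "A4 j = (\<lambda>x t. interleave N (\<lambda>j. A3 j x t) (\<lambda>j. A4 j x t) $ (2*(N - Suc j) + 1))"
    by (simp_all only: interleave_index[OF j])
  then show "smooth2 (A1 j)" "smooth2 (A2 j)" "smooth2 (A3 j)" "smooth2 (A4 j)"
    by (simp_all only: cramer12[OF c(1)] cramer12[OF c(2)] cramer22[OF c(1)] cramer22[OF c(2)]
        smooth2_cramer_quotients[OF c(1)] smooth2_cramer_quotients[OF c(2)])
qed

lemma smooth_mat2_T: "smooth_mat2 (T lm)"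
  by (rule smooth_mat2I[OF darbouxT_def]) simp_all

lemma B12_kernel_trivial:
  assumes "\<And>k. k < 2*N \<Longrightarrow>
      (\<Sum>j<N. u j * lam k ^ (2*j) * phi1 k x t + v j * lam k ^ (2*j+1) * phi2 k x t) = 0"
    and "j < N"
  shows "u j = 0 \<and> v j = 0"
proof -
  have "B12 x t *\<^sub>v interleave N u v = 0\<^sub>v (2*N)"
    using matB12_system[of N u lam _ v _ "\<lambda>_. 0"] assms(1) by (simp add: zero_vec_def)
  then show ?thesis
    using interleave_eq_zero[OF matB12_carrier] det_B12 assms(2) by blast
qed

lemma B22_kernel_trivial:
  assumes "\<And>k. k < 2*N \<Longrightarrow>
      (\<Sum>j<N. u j * lam k ^ (2*j+1) * phi1 k x t + v j * lam k ^ (2*j) * phi2 k x t) = 0"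
    and "j < N"
  shows "u j = 0 \<and> v j = 0"
proof -
  have "B22 x t *\<^sub>v interleave N u v = 0\<^sub>v (2*N)"
    using matB22_system[of N u lam _ v _ "\<lambda>_. 0"] assms(1) by (simp add: zero_vec_def)
  then show ?thesis
    using interleave_eq_zero[OF matB22_carrier] det_B22 assms(2) by blast
qed

text \<open>
  For every \<open>\<lambda>\<^sub>k\<close>, the defect \<open>D = T\<^sub>x + T P - P' T\<close> (and likewise its \<open>t\<close>-analogue)
  annihilates \<open>\<Phi>\<^sub>k\<close>: differentiate \<open>T(\<lambda>\<^sub>k) \<Phi>\<^sub>k = 0\<close> and use \<open>\<Phi>\<^sub>k\<^sub>,\<^sub>x = P \<Phi>\<^sub>k\<close>.
\<close>

lemma x_defect_annihilates:
  assumes "k < 2*N" and "P' \<in> carrier_mat 2 2"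
  shows "(mdx (T (lam k)) x t + T (lam k) x t * LaxP \<rho> q r (lam k) x t - P' * T (lam k) x t)
      *\<^sub>v cvec2 (phi1 k x t) (phi2 k x t) = 0\<^sub>v 2"
  using assms kernel lax_sol smooth2_phi[OF assms(1)]
  by (intro defect_mult_vec_eq_zero[where df="cvec2 (pdx (phi1 k) x t) (pdx (phi2 k) x t)"]
      pdx_kernel_relation smooth_mat2_T) (simp_all add: lax_solution_def)

lemma t_defect_annihilates:
  assumes "k < 2*N" and "Q' \<in> carrier_mat 2 2"
  shows "(mdt (T (lam k)) x t + T (lam k) x t * LaxQ \<rho> q r (lam k) x t - Q' * T (lam k) x t)
      *\<^sub>v cvec2 (phi1 k x t) (phi2 k x t) = 0\<^sub>v 2"
  using assms kernel lax_sol smooth2_phi[OF assms(1)]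
  by (intro defect_mult_vec_eq_zero[where df="cvec2 (pdt (phi1 k) x t) (pdt (phi2 k) x t)"]
      pdt_kernel_relation smooth_mat2_T) (simp_all add: lax_solution_def)

definition new_q :: "real \<Rightarrow> real \<Rightarrow> complex" where
  "new_q = (\<lambda>x t. q x t - 2 * \<i> * complex_of_real \<rho> * coefA2 N lam phi1 phi2 x t
      + pdx (coefA2 N lam phi1 phi2) x t)"

definition new_r :: "real \<Rightarrow> real \<Rightarrow> complex" where
  "new_r = (\<lambda>x t. r x t + 2 * \<i> * complex_of_real \<rho> * coefA3 N lam phi1 phi2 x t
      + pdx (coefA3 N lam phi1 phi2) x t)"

lemma new_q_eq: "new_q = (\<lambda>x t. q x t - 2 * \<i> * of_real \<rho> * A2 (N - 1) x t + pdx (A2 (N - 1)) x t)"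
  by (simp add: new_q_def coefA2_eq)

lemma new_r_eq: "new_r = (\<lambda>x t. r x t + 2 * \<i> * of_real \<rho> * A3 (N - 1) x t + pdx (A3 (N - 1)) x t)"
  by (simp add: new_r_def coefA3_eq)

lemma smooth2_new_q [simp]: "smooth2 new_q" and smooth2_new_r [simp]: "smooth2 new_r"
  using N_pos by (simp_all add: new_q_eq new_r_eq)

lemma smooth2_ext_coeffs [simp]:
  "smooth2 (ext_coeff N A1 c n)" "smooth2 (ext_coeff N A2 c n)"
  "smooth2 (ext_coeff N A3 c n)" "smooth2 (ext_coeff N A4 c n)"
  by (simp_all add: smooth2_ext_coeff)

lemma darbouxT_fun: "T lm = (\<lambda>x t. mat2
    (lm^(2*N) + (\<Sum>j<N. A1 j x t * lm^(2*j))) (\<Sum>j<N. A2 j x t * lm^(2*j+1))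
    (\<Sum>j<N. A3 j x t * lm^(2*j+1)) (lm^(2*N) + (\<Sum>j<N. A4 j x t * lm^(2*j))))"
  by (intro ext) (simp add: darbouxT_def)

lemma mdx_darbouxT: "mdx (T lm) x t = mat2
    (poly (coeff_poly N (\<lambda>j. pdx (A1 j)) 0 x t) (lm^2)) (lm * poly (coeff_poly N (\<lambda>j. pdx (A2 j)) 0 x t) (lm^2))
    (lm * poly (coeff_poly N (\<lambda>j. pdx (A3 j)) 0 x t) (lm^2)) (poly (coeff_poly N (\<lambda>j. pdx (A4 j)) 0 x t) (lm^2))"
  unfolding darbouxT_fun mdx_mat2
  by (simp add: even_sum_as_poly[symmetric] odd_sum_as_poly[symmetric] sum_distrib_left ac_simps)

lemma mdt_darbouxT: "mdt (T lm) x t = mat2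
    (poly (coeff_poly N (\<lambda>j. pdt (A1 j)) 0 x t) (lm^2)) (lm * poly (coeff_poly N (\<lambda>j. pdt (A2 j)) 0 x t) (lm^2))
    (lm * poly (coeff_poly N (\<lambda>j. pdt (A3 j)) 0 x t) (lm^2)) (poly (coeff_poly N (\<lambda>j. pdt (A4 j)) 0 x t) (lm^2))"
  unfolding darbouxT_fun mdt_mat2
  by (simp add: even_sum_as_poly[symmetric] odd_sum_as_poly[symmetric] sum_distrib_left ac_simps)

section \<open>The \<open>x\<close>-part of the Lax pair\<close>

definition xdefect11 :: "real \<Rightarrow> real \<Rightarrow> complex poly" where
  "xdefect11 x t = coeff_poly N (\<lambda>j. pdx (A1 j)) 0 x t + Polynomial.smult (r x t) (coeff_poly N A2 0 x t)
     - Polynomial.smult (new_q x t) (coeff_poly N A3 0 x t)"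

definition xdefect12 :: "real \<Rightarrow> real \<Rightarrow> complex poly" where
  "xdefect12 x t = pCons 0 (coeff_poly N (\<lambda>j. pdx (A2 j)) 0 x t
       - Polynomial.smult (2 * \<i> * of_real \<rho>) (coeff_poly N A2 0 x t))
     + Polynomial.smult (q x t) (coeff_poly N A1 1 x t) - Polynomial.smult (new_q x t) (coeff_poly N A4 1 x t)
     + Polynomial.smult (2 * \<i>) (coeff_poly N A2 0 x t)"

definition xdefect21 :: "real \<Rightarrow> real \<Rightarrow> complex poly" where
  "xdefect21 x t = pCons 0 (coeff_poly N (\<lambda>j. pdx (A3 j)) 0 x t
       + Polynomial.smult (2 * \<i> * of_real \<rho>) (coeff_poly N A3 0 x t))
     + Polynomial.smult (r x t) (coeff_poly N A4 1 x t) - Polynomial.smult (new_r x t) (coeff_poly N A1 1 x t)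
     - Polynomial.smult (2 * \<i>) (coeff_poly N A3 0 x t)"

definition xdefect22 :: "real \<Rightarrow> real \<Rightarrow> complex poly" where
  "xdefect22 x t = coeff_poly N (\<lambda>j. pdx (A4 j)) 0 x t + Polynomial.smult (q x t) (coeff_poly N A3 0 x t)
     - Polynomial.smult (new_r x t) (coeff_poly N A2 0 x t)"

lemma x_defect_as_poly:
  assumes "lm \<noteq> 0"
  shows "mdx (T lm) x t + T lm x t * LaxP \<rho> q r lm x t - LaxP \<rho> new_q new_r lm x t * T lm x t
     = mat2 (poly (xdefect11 x t) (lm^2)) (inverse lm * poly (xdefect12 x t) (lm^2))
            (inverse lm * poly (xdefect21 x t) (lm^2)) (poly (xdefect22 x t) (lm^2))"
  unfolding mdx_darbouxT darbouxT_as_poly LaxP_mat2 mat2_mult mat2_add mat2_diff mat2_eq_iff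
    xdefect11_def xdefect12_def xdefect21_def xdefect22_def
  using assms by (simp add: field_simps power2_eq_square)

lemma coeff_xdefect:
  "coeff (xdefect11 x t) n = ext_coeff N (\<lambda>j. pdx (A1 j)) 0 n x t + r x t * ext_coeff N A2 0 n x t
     - new_q x t * ext_coeff N A3 0 n x t"
  "coeff (xdefect12 x t) n = (case n of 0 \<Rightarrow> 0
     | Suc m \<Rightarrow> ext_coeff N (\<lambda>j. pdx (A2 j)) 0 m x t - 2 * \<i> * of_real \<rho> * ext_coeff N A2 0 m x t)
     + q x t * ext_coeff N A1 1 n x t - new_q x t * ext_coeff N A4 1 n x t + 2 * \<i> * ext_coeff N A2 0 n x t"
  "coeff (xdefect21 x t) n = (case n of 0 \<Rightarrow> 0
     | Suc m \<Rightarrow> ext_coeff N (\<lambda>j. pdx (A3 j)) 0 m x t + 2 * \<i> * of_real \<rho> * ext_coeff N A3 0 m x t)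
     + r x t * ext_coeff N A4 1 n x t - new_r x t * ext_coeff N A1 1 n x t - 2 * \<i> * ext_coeff N A3 0 n x t"
  "coeff (xdefect22 x t) n = ext_coeff N (\<lambda>j. pdx (A4 j)) 0 n x t + q x t * ext_coeff N A3 0 n x t
     - new_r x t * ext_coeff N A2 0 n x t"
  by (simp_all add: xdefect11_def xdefect12_def xdefect21_def xdefect22_def coeff_pCons split: nat.split)

text \<open>
  The coefficients of \<open>\<lambda>\<^sup>2\<^sup>N\<close> in the off-diagonal entries vanish precisely because of the choice
  of \<open>q[N]\<close> and \<open>r[N]\<close>.
\<close>

lemma xdefect_high_coeffs:
  assumes "N \<le> n"
  shows "coeff (xdefect11 x t) n = 0" "coeff (xdefect12 x t) n = 0"
    "coeff (xdefect21 x t) n = 0" "coeff (xdefect22 x t) n = 0"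
proof -
  show "coeff (xdefect11 x t) n = 0" "coeff (xdefect22 x t) n = 0"
    using assms by (simp_all add: coeff_xdefect ext_coeff_apply)
  obtain m where N_eq: "N = Suc m"
    using N_pos by (cases N) auto
  have "coeff (xdefect12 x t) N = 0"
    unfolding coeff_xdefect(2) new_q_eq by (simp add: N_eq ext_coeff_apply)
  moreover have "coeff (xdefect21 x t) N = 0"
    unfolding coeff_xdefect(3) new_r_eq by (simp add: N_eq ext_coeff_apply)
  moreover have "coeff (xdefect12 x t) (Suc m') = 0" "coeff (xdefect21 x t) (Suc m') = 0"
    if "N \<le> m'" for m'
    using that by (simp_all add: coeff_xdefect ext_coeff_apply)
  ultimately show "coeff (xdefect12 x t) n = 0" "coeff (xdefect21 x t) n = 0"
    using assms by (cases "n = N"; cases n; simp)+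
qed

lemma xdefect_at_spectral_parameter:
  assumes k: "k < 2*N"
  shows "lam k * poly (xdefect11 x t) (lam k^2) * phi1 k x t
      + poly (xdefect12 x t) (lam k^2) * phi2 k x t = 0" (is ?row1)
    and "poly (xdefect21 x t) (lam k^2) * phi1 k x t
      + lam k * poly (xdefect22 x t) (lam k^2) * phi2 k x t = 0" (is ?row2)
proof -
  have lk: "lam k \<noteq> 0" using lam_nonzeroD k .
  have "poly (xdefect11 x t) (lam k^2) * phi1 k x t
      + inverse (lam k) * poly (xdefect12 x t) (lam k^2) * phi2 k x t = 0"
    "inverse (lam k) * poly (xdefect21 x t) (lam k^2) * phi1 k x t
      + poly (xdefect22 x t) (lam k^2) * phi2 k x t = 0"
    using x_defect_annihilates[OF k, of "LaxP \<rho> new_q new_r (lam k) x t" x t]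
    unfolding x_defect_as_poly[OF lk] mat2_mult_cvec2 zero_cvec2 cvec2_eq_iff by auto
  then show ?row1 ?row2
    using lk by (simp_all add: field_simps)
qed

lemma xdefect_coeffs_zero:
  "coeff (xdefect11 x t) n = 0" "coeff (xdefect12 x t) n = 0"
  "coeff (xdefect21 x t) n = 0" "coeff (xdefect22 x t) n = 0"
proof -
  have "coeff (xdefect11 x t) n = 0 \<and> coeff (xdefect12 x t) n = 0 \<and>
        coeff (xdefect21 x t) n = 0 \<and> coeff (xdefect22 x t) n = 0"
  proof (cases "n < N")
    case True
    have "coeff (xdefect11 x t) n = 0 \<and> coeff (xdefect12 x t) n = 0"
    proof (rule B22_kernel_trivial[where u="coeff (xdefect11 x t)" and v="coeff (xdefect12 x t)"])
      fix k assume "k < 2*N"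
      from xdefect_at_spectral_parameter(1)[OF this, of x t]
      show "(\<Sum>j<N. coeff (xdefect11 x t) j * lam k ^ (2*j+1) * phi1 k x t
          + coeff (xdefect12 x t) j * lam k ^ (2*j) * phi2 k x t) = 0"
        by (simp only: poly_pair_eq_sum_odd_even[OF xdefect_high_coeffs(1,2), symmetric])
    qed (rule True)
    moreover have "coeff (xdefect21 x t) n = 0 \<and> coeff (xdefect22 x t) n = 0"
    proof (rule B12_kernel_trivial[where u="coeff (xdefect21 x t)" and v="coeff (xdefect22 x t)"])
      fix k assume "k < 2*N"
      from xdefect_at_spectral_parameter(2)[OF this, of x t]
      show "(\<Sum>j<N. coeff (xdefect21 x t) j * lam k ^ (2*j) * phi1 k x t
          + coeff (xdefect22 x t) j * lam k ^ (2*j+1) * phi2 k x t) = 0"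
        by (simp only: poly_pair_eq_sum_even_odd[OF xdefect_high_coeffs(3,4), symmetric])
    qed (rule True)
    ultimately show ?thesis by blast
  qed (simp add: xdefect_high_coeffs)
  then show "coeff (xdefect11 x t) n = 0" "coeff (xdefect12 x t) n = 0"
    "coeff (xdefect21 x t) n = 0" "coeff (xdefect22 x t) n = 0"
    by blast+
qed

theorem darboux_x_part:
  assumes "lm \<noteq> 0"
  shows "mdx (T lm) x t + T lm x t * LaxP \<rho> q r lm x t = LaxP \<rho> new_q new_r lm x t * T lm x t"
proof -
  have "xdefect11 x t = 0" "xdefect12 x t = 0" "xdefect21 x t = 0" "xdefect22 x t = 0"
    by (simp_all add: poly_eq_iff xdefect_coeffs_zero)
  then have "mdx (T lm) x t + T lm x t * LaxP \<rho> q r lm x t - LaxP \<rho> new_q new_r lm x t * T lm x t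
      = 0\<^sub>m 2 2"
    by (simp add: x_defect_as_poly[OF assms] zero_mat2)
  then show ?thesis
    by (subst (asm) diff_eq_zero_mat_iff[of _ 2 2]) (auto intro!: mult_carrier_mat[where n=2] add_carrier_mat)
qed

lemma pdx_ext_coeffs:
  "pdx (ext_coeff N A1 c n) = ext_coeff N (\<lambda>j. pdx (A1 j)) 0 n"
  "pdx (ext_coeff N A2 c n) = ext_coeff N (\<lambda>j. pdx (A2 j)) 0 n"
  "pdx (ext_coeff N A3 c n) = ext_coeff N (\<lambda>j. pdx (A3 j)) 0 n"
  "pdx (ext_coeff N A4 c n) = ext_coeff N (\<lambda>j. pdx (A4 j)) 0 n"
  by (simp_all add: pdx_ext_coeff)

lemma pdx_coefficients:
  "pdx (ext_coeff N A1 1 n) = (\<lambda>x t. new_q x t * ext_coeff N A3 0 n x t - r x t * ext_coeff N A2 0 n x t)"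
  "pdx (ext_coeff N A4 1 n) = (\<lambda>x t. new_r x t * ext_coeff N A2 0 n x t - q x t * ext_coeff N A3 0 n x t)"
  "pdx (ext_coeff N A2 0 n) = (\<lambda>x t. 2 * \<i> * of_real \<rho> * ext_coeff N A2 0 n x t
     - (q x t * ext_coeff N A1 1 (Suc n) x t - new_q x t * ext_coeff N A4 1 (Suc n) x t
        + 2 * \<i> * ext_coeff N A2 0 (Suc n) x t))"
  "pdx (ext_coeff N A3 0 n) = (\<lambda>x t. - 2 * \<i> * of_real \<rho> * ext_coeff N A3 0 n x t
     - (r x t * ext_coeff N A4 1 (Suc n) x t - new_r x t * ext_coeff N A1 1 (Suc n) x t
        - 2 * \<i> * ext_coeff N A3 0 (Suc n) x t))"
  using xdefect_coeffs_zero(1)[of _ _ n] xdefect_coeffs_zero(4)[of _ _ n]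
    xdefect_coeffs_zero(2)[of _ _ "Suc n"] xdefect_coeffs_zero(3)[of _ _ "Suc n"]
  by (auto simp: coeff_xdefect pdx_ext_coeffs algebra_simps intro!: ext)

lemma lowest_order_relations:
  "q x t * ext_coeff N A1 1 0 x t - new_q x t * ext_coeff N A4 1 0 x t + 2 * \<i> * ext_coeff N A2 0 0 x t = 0"
  "r x t * ext_coeff N A4 1 0 x t - new_r x t * ext_coeff N A1 1 0 x t - 2 * \<i> * ext_coeff N A3 0 0 x t = 0"
  using xdefect_coeffs_zero(2)[of x t 0] xdefect_coeffs_zero(3)[of x t 0]
  by (simp_all add: coeff_xdefect)

end

section \<open>The \<open>t\<close>-part of the Lax pair\<close>

text \<open>
  The pure algebra behind the three lowest orders of \<open>T\<^sub>t + T Q - Q[N] T\<close>. In the lemma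
  below, \<open>ak, al, am\<close> stand for the three lowest coefficients of the \<open>(1,1)\<close>-entry of \<open>T\<close>
  (similarly \<open>b\<close>, \<open>c\<close>, \<open>d\<close> for the other entries), \<open>qv, qd, qdd\<close> for \<open>q, q\<^sub>x, q\<^sub>x\<^sub>x\<close>,
  \<open>qtv, qtd, qtdd\<close> for the same derivatives of \<open>q[N]\<close>, \<open>rh\<close> for \<open>\<rho>\<close> and \<open>jj\<close> for \<open>\<i>\<close>.
  The hypotheses are the lowest-order relations of the \<open>x\<close>-part and their first two
  \<open>x\<close>-derivatives; they determine \<open>b\<close> and \<open>c\<close> in terms of \<open>a\<close> and \<open>d\<close>, which makes the
  conclusions (the lowest coefficients of the \<open>t\<close>-defect) identities.
\<close>

lemma lowest_tdefect_coeffs_algebra: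
  fixes ak al am bk bl bm ck cl cm dk dl dm jj qd qdd qtd qtdd qtv qv rd rdd rh rtd rtdd rtv rv :: complex
  assumes jj: "jj * jj = -1"
    and R1: "qv * ak - qtv * dk + 2 * jj * bk = 0"
    and DR1: "(ak*qd + (-2)*al*jj*qv + 4*bk*jj*jj*rh + (-1)*bk*qv*rv + (-1)*bk*qtv*rtv
        + (-4)*bl*jj*jj + 2*ck*qv*qtv + (-1)*dk*qtd + 2*dl*jj*qtv) = 0"
    and DDR1: "(ak*qdd + (-2)*al*jj*qd + (-4)*al*jj*jj*qv*rh + 3*al*qv*qtv*rtv + al*qv*qv*rv
        + 4*am*jj*jj*qv + (-2)*bk*jj*qv*rv*rh + (-2)*bk*jj*qtv*rh*rtv + 8*bk*jj*jj*jj*rh*rh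
        + (-1)*bk*qv*rd + (-2)*bk*qd*rv + (-1)*bk*qtv*rtd + (-2)*bk*qtd*rtv + 4*bl*jj*qv*rv
        + 4*bl*jj*qtv*rtv + (-16)*bl*jj*jj*jj*rh + 8*bm*jj*jj*jj + (-4)*ck*jj*qv*qtv*rh
        + 3*ck*qv*qtd + 3*ck*qd*qtv + (-1)*dk*qtdd + 2*dl*jj*qtd + 4*dl*jj*jj*qtv*rh
        + (-3)*dl*qv*qtv*rv + (-1)*dl*qtv*qtv*rtv + (-4)*dm*jj*jj*qtv) = 0"
    and R2: "rv * dk - rtv * ak - 2 * jj * ck = 0"
    and DR2: "((-1)*ak*rtd + (-2)*al*jj*rtv + 2*bk*rv*rtv + 4*ck*jj*jj*rh + (-1)*ck*qv*rv
        + (-1)*ck*qtv*rtv + (-4)*cl*jj*jj + dk*rd + 2*dl*jj*rv) = 0"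
    and DDR2: "((-1)*ak*rtdd + (-2)*al*jj*rtd + 4*al*jj*jj*rh*rtv + (-3)*al*qv*rv*rtv
        + (-1)*al*qtv*rtv*rtv + (-4)*am*jj*jj*rtv + 4*bk*jj*rv*rh*rtv + 3*bk*rv*rtd + 3*bk*rd*rtv
        + 2*ck*jj*qv*rv*rh + 2*ck*jj*qtv*rh*rtv + (-8)*ck*jj*jj*jj*rh*rh + (-2)*ck*qv*rd
        + (-1)*ck*qd*rv + (-2)*ck*qtv*rtd + (-1)*ck*qtd*rtv + (-4)*cl*jj*qv*rv + (-4)*cl*jj*qtv*rtv
        + 16*cl*jj*jj*jj*rh + (-8)*cm*jj*jj*jj + dk*rdd + 2*dl*jj*rd + (-4)*dl*jj*jj*rv*rh
        + dl*qv*rv*rv + 3*dl*qtv*rv*rtv + 4*dm*jj*jj*rv) = 0"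
  shows "((-2)*ak*jj*qv*rv + 2*ak*jj*qtv*rtv + 4*bk*rv + (-4)*ck*qtv) = 0"
    and "((-3/2)*ak*jj*qv*qv*rv*rv + (3/2)*ak*jj*qtv*qtv*rtv*rtv + (-1)*ak*qv*rd + ak*qd*rv
        + ak*qtv*rtd + (-1)*ak*qtd*rtv + (-2)*al*jj*qv*rv + 2*al*jj*qtv*rtv + (-2)*bk*jj*rd
        + 2*bk*qv*rv*rv + (-4)*bk*rv*rh + 4*bl*rv + (-2)*ck*jj*qtd + 4*ck*qtv*rh
        + (-2)*ck*qtv*qtv*rtv + (-4)*cl*qtv) = 0"
    and "(4*ak*qv + 8*bk*jj + (-4)*dk*qtv) = 0"
    and "(2*ak*jj*qd + (-4)*ak*qv*rh + 2*ak*qv*qv*rv + 4*al*qv + 2*bk*jj*qv*rv + 2*bk*jj*qtv*rtv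
        + (-16)*bk*jj*rh + 8*bl*jj + (-2)*dk*jj*qtd + 4*dk*qtv*rh + (-2)*dk*qtv*qtv*rtv
        + (-4)*dl*qtv) = 0"
    and "(3*ak*jj*qv*qd*rv + (-4)*ak*qv*rh*rh + 2*ak*qv*qv*rv*rh + (3/2)*ak*qv*qv*qv*rv*rv
        + (-1)*ak*qdd + 2*al*jj*qd + (-4)*al*qv*rh + 2*al*qv*qv*rv + 4*am*qv
        + (3/2)*bk*jj*qv*qv*rv*rv + (3/2)*bk*jj*qtv*qtv*rtv*rtv + bk*qv*rd + (-1)*bk*qd*rv
        + bk*qtv*rtd + (-1)*bk*qtd*rtv + 2*bl*jj*qv*rv + 2*bl*jj*qtv*rtv + (-16)*bl*jj*rh + 8*bm*jj
        + (-3)*dk*jj*qtv*qtd*rtv + 4*dk*qtv*rh*rh + (-2)*dk*qtv*qtv*rh*rtv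
        + (-3/2)*dk*qtv*qtv*qtv*rtv*rtv + dk*qtdd + (-2)*dl*jj*qtd + 4*dl*qtv*rh
        + (-2)*dl*qtv*qtv*rtv + (-4)*dm*qtv) = 0"
    and "((-4)*ak*rtv + (-8)*ck*jj + 4*dk*rv) = 0"
    and "(2*ak*jj*rtd + (-2)*ak*qtv*rtv*rtv + 4*ak*rh*rtv + (-4)*al*rtv + (-2)*ck*jj*qv*rv
        + (-2)*ck*jj*qtv*rtv + 16*ck*jj*rh + (-8)*cl*jj + (-2)*dk*jj*rd + 2*dk*qv*rv*rv
        + (-4)*dk*rv*rh + 4*dl*rv) = 0"
    and "(3*ak*jj*qtv*rtv*rtd + (-2)*ak*qtv*rh*rtv*rtv + (-3/2)*ak*qtv*qtv*rtv*rtv*rtv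
        + 4*ak*rh*rh*rtv + ak*rtdd + 2*al*jj*rtd + (-2)*al*qtv*rtv*rtv + 4*al*rh*rtv + (-4)*am*rtv
        + (-3/2)*ck*jj*qv*qv*rv*rv + (-3/2)*ck*jj*qtv*qtv*rtv*rtv + (-1)*ck*qv*rd + ck*qd*rv
        + (-1)*ck*qtv*rtd + ck*qtd*rtv + (-2)*cl*jj*qv*rv + (-2)*cl*jj*qtv*rtv + 16*cl*jj*rh
        + (-8)*cm*jj + (-3)*dk*jj*qv*rv*rd + 2*dk*qv*rv*rv*rh + (3/2)*dk*qv*qv*rv*rv*rv
        + (-4)*dk*rv*rh*rh + (-1)*dk*rdd + (-2)*dl*jj*rd + 2*dl*qv*rv*rv + (-4)*dl*rv*rh + 4*dm*rv)
        = 0"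
    and "((-4)*bk*rtv + 4*ck*qv + 2*dk*jj*qv*rv + (-2)*dk*jj*qtv*rtv) = 0"
    and "(2*bk*jj*rtd + (-2)*bk*qtv*rtv*rtv + 4*bk*rh*rtv + (-4)*bl*rtv + 2*ck*jj*qd + (-4)*ck*qv*rh
        + 2*ck*qv*qv*rv + 4*cl*qv + (3/2)*dk*jj*qv*qv*rv*rv + (-3/2)*dk*jj*qtv*qtv*rtv*rtv
        + dk*qv*rd + (-1)*dk*qd*rv + (-1)*dk*qtv*rtd + dk*qtd*rtv + 2*dl*jj*qv*rv
        + (-2)*dl*jj*qtv*rtv) = 0"
proof -
  have bk: "bk = ((1/2)*ak*jj*qv + (-1/2)*dk*jj*qtv)"
    using R1  jj by Groebner_Basis.algebra
  have ck: "ck = ((1/2)*ak*jj*rtv + (-1/2)*dk*jj*rv)"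
    using R2 bk jj by Groebner_Basis.algebra
  have bl: "bl = ((-1/8)*ak*jj*qv*qtv*rtv + (1/2)*ak*jj*qv*rh + (1/8)*ak*jj*qv*qv*rv + (-1/4)*ak*qd
      + (1/2)*al*jj*qv + (1/8)*dk*jj*qv*qtv*rv + (-1/2)*dk*jj*qtv*rh + (-1/8)*dk*jj*qtv*qtv*rtv
      + (1/4)*dk*qtd + (-1/2)*dl*jj*qtv)"
    using DR1 bk ck jj by Groebner_Basis.algebra
  have cl: "cl = ((-1/8)*ak*jj*qv*rv*rtv + (1/8)*ak*jj*qtv*rtv*rtv + (1/2)*ak*jj*rh*rtv
      + (1/4)*ak*rtd + (1/2)*al*jj*rtv + (-1/8)*dk*jj*qv*rv*rv + (1/8)*dk*jj*qtv*rv*rtv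
      + (-1/2)*dk*jj*rv*rh + (-1/4)*dk*rd + (-1/2)*dl*jj*rv)"
    using DR2 bk ck bl jj by Groebner_Basis.algebra
  have bm: "bm = ((-3/8)*ak*jj*qv*qtv*rh*rtv + (-1/16)*ak*jj*qv*qtv*qtv*rtv*rtv
      + (1/2)*ak*jj*qv*rh*rh + (3/8)*ak*jj*qv*qv*rv*rh + (1/16)*ak*jj*qv*qv*qv*rv*rv
      + (-1/8)*ak*jj*qdd + (-1/4)*ak*qv*qd*rv + (-1/16)*ak*qv*qtv*rtd + (1/16)*ak*qv*qtd*rtv
      + (-1/16)*ak*qv*qv*rd + (1/16)*ak*qd*qtv*rtv + (-1/2)*ak*qd*rh + (-1/8)*al*jj*qv*qtv*rtv
      + (1/2)*al*jj*qv*rh + (1/8)*al*jj*qv*qv*rv + (-1/4)*al*qd + (1/2)*am*jj*qv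
      + (3/8)*dk*jj*qv*qtv*rv*rh + (1/16)*dk*jj*qv*qv*qtv*rv*rv + (-1/2)*dk*jj*qtv*rh*rh
      + (-3/8)*dk*jj*qtv*qtv*rh*rtv + (-1/16)*dk*jj*qtv*qtv*qtv*rtv*rtv + (1/8)*dk*jj*qtdd
      + (1/16)*dk*qv*qtv*rd + (-1/16)*dk*qv*qtd*rv + (-1/16)*dk*qd*qtv*rv + (1/4)*dk*qtv*qtd*rtv
      + (1/16)*dk*qtv*qtv*rtd + (1/2)*dk*qtd*rh + (1/8)*dl*jj*qv*qtv*rv + (-1/2)*dl*jj*qtv*rh
      + (-1/8)*dl*jj*qtv*qtv*rtv + (1/4)*dl*qtd + (-1/2)*dm*jj*qtv)"
    using DDR1 bk ck bl cl jj by Groebner_Basis.algebra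
  have cm: "cm = ((-3/8)*ak*jj*qv*rv*rh*rtv + (-1/16)*ak*jj*qv*qv*rv*rv*rtv
      + (3/8)*ak*jj*qtv*rh*rtv*rtv + (1/16)*ak*jj*qtv*qtv*rtv*rtv*rtv + (1/2)*ak*jj*rh*rh*rtv
      + (-1/8)*ak*jj*rtdd + (-1/16)*ak*qv*rv*rtd + (-1/16)*ak*qv*rd*rtv + (1/16)*ak*qd*rv*rtv
      + (1/4)*ak*qtv*rtv*rtd + (1/16)*ak*qtd*rtv*rtv + (1/2)*ak*rh*rtd + (-1/8)*al*jj*qv*rv*rtv
      + (1/8)*al*jj*qtv*rtv*rtv + (1/2)*al*jj*rh*rtv + (1/4)*al*rtd + (1/2)*am*jj*rtv
      + (-3/8)*dk*jj*qv*rv*rv*rh + (-1/16)*dk*jj*qv*qv*rv*rv*rv + (3/8)*dk*jj*qtv*rv*rh*rtv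
      + (1/16)*dk*jj*qtv*qtv*rv*rtv*rtv + (-1/2)*dk*jj*rv*rh*rh + (1/8)*dk*jj*rdd
      + (-1/4)*dk*qv*rv*rd + (-1/16)*dk*qd*rv*rv + (1/16)*dk*qtv*rv*rtd + (1/16)*dk*qtv*rd*rtv
      + (-1/16)*dk*qtd*rv*rtv + (-1/2)*dk*rd*rh + (-1/8)*dl*jj*qv*rv*rv + (1/8)*dl*jj*qtv*rv*rtv
      + (-1/2)*dl*jj*rv*rh + (-1/4)*dl*rd + (-1/2)*dm*jj*rv)"
    using DDR2 bk ck bl cl bm jj by Groebner_Basis.algebra
  show "((-2)*ak*jj*qv*rv + 2*ak*jj*qtv*rtv + 4*bk*rv + (-4)*ck*qtv)
      = 0" unfolding bk ck bl cl bm cm by (Groebner_Basis.algebra | (use jj in Groebner_Basis.algebra))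
  show "((-3/2)*ak*jj*qv*qv*rv*rv + (3/2)*ak*jj*qtv*qtv*rtv*rtv + (-1)*ak*qv*rd + ak*qd*rv
      + ak*qtv*rtd + (-1)*ak*qtd*rtv + (-2)*al*jj*qv*rv + 2*al*jj*qtv*rtv + (-2)*bk*jj*rd
      + 2*bk*qv*rv*rv + (-4)*bk*rv*rh + 4*bl*rv + (-2)*ck*jj*qtd + 4*ck*qtv*rh + (-2)*ck*qtv*qtv*rtv
      + (-4)*cl*qtv) = 0" unfolding bk ck bl cl bm cm by (Groebner_Basis.algebra | (use jj in Groebner_Basis.algebra))
  show "(4*ak*qv + 8*bk*jj + (-4)*dk*qtv)
      = 0" unfolding bk ck bl cl bm cm by (Groebner_Basis.algebra | (use jj in Groebner_Basis.algebra))
  show "(2*ak*jj*qd + (-4)*ak*qv*rh + 2*ak*qv*qv*rv + 4*al*qv + 2*bk*jj*qv*rv + 2*bk*jj*qtv*rtv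
      + (-16)*bk*jj*rh + 8*bl*jj + (-2)*dk*jj*qtd + 4*dk*qtv*rh + (-2)*dk*qtv*qtv*rtv + (-4)*dl*qtv)
      = 0" unfolding bk ck bl cl bm cm by (Groebner_Basis.algebra | (use jj in Groebner_Basis.algebra))
  show "(3*ak*jj*qv*qd*rv + (-4)*ak*qv*rh*rh + 2*ak*qv*qv*rv*rh + (3/2)*ak*qv*qv*qv*rv*rv
      + (-1)*ak*qdd + 2*al*jj*qd + (-4)*al*qv*rh + 2*al*qv*qv*rv + 4*am*qv + (3/2)*bk*jj*qv*qv*rv*rv
      + (3/2)*bk*jj*qtv*qtv*rtv*rtv + bk*qv*rd + (-1)*bk*qd*rv + bk*qtv*rtd + (-1)*bk*qtd*rtv
      + 2*bl*jj*qv*rv + 2*bl*jj*qtv*rtv + (-16)*bl*jj*rh + 8*bm*jj + (-3)*dk*jj*qtv*qtd*rtv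
      + 4*dk*qtv*rh*rh + (-2)*dk*qtv*qtv*rh*rtv + (-3/2)*dk*qtv*qtv*qtv*rtv*rtv + dk*qtdd
      + (-2)*dl*jj*qtd + 4*dl*qtv*rh + (-2)*dl*qtv*qtv*rtv + (-4)*dm*qtv)
      = 0" unfolding bk ck bl cl bm cm by (Groebner_Basis.algebra | (use jj in Groebner_Basis.algebra))
  show "((-4)*ak*rtv + (-8)*ck*jj + 4*dk*rv)
      = 0" unfolding bk ck bl cl bm cm by (Groebner_Basis.algebra | (use jj in Groebner_Basis.algebra))
  show "(2*ak*jj*rtd + (-2)*ak*qtv*rtv*rtv + 4*ak*rh*rtv + (-4)*al*rtv + (-2)*ck*jj*qv*rv
      + (-2)*ck*jj*qtv*rtv + 16*ck*jj*rh + (-8)*cl*jj + (-2)*dk*jj*rd + 2*dk*qv*rv*rv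
      + (-4)*dk*rv*rh + 4*dl*rv) = 0" unfolding bk ck bl cl bm cm by (Groebner_Basis.algebra | (use jj in Groebner_Basis.algebra))
  show "(3*ak*jj*qtv*rtv*rtd + (-2)*ak*qtv*rh*rtv*rtv + (-3/2)*ak*qtv*qtv*rtv*rtv*rtv
      + 4*ak*rh*rh*rtv + ak*rtdd + 2*al*jj*rtd + (-2)*al*qtv*rtv*rtv + 4*al*rh*rtv + (-4)*am*rtv
      + (-3/2)*ck*jj*qv*qv*rv*rv + (-3/2)*ck*jj*qtv*qtv*rtv*rtv + (-1)*ck*qv*rd + ck*qd*rv
      + (-1)*ck*qtv*rtd + ck*qtd*rtv + (-2)*cl*jj*qv*rv + (-2)*cl*jj*qtv*rtv + 16*cl*jj*rh
      + (-8)*cm*jj + (-3)*dk*jj*qv*rv*rd + 2*dk*qv*rv*rv*rh + (3/2)*dk*qv*qv*rv*rv*rv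
      + (-4)*dk*rv*rh*rh + (-1)*dk*rdd + (-2)*dl*jj*rd + 2*dl*qv*rv*rv + (-4)*dl*rv*rh + 4*dm*rv)
      = 0" unfolding bk ck bl cl bm cm by (Groebner_Basis.algebra | (use jj in Groebner_Basis.algebra))
  show "((-4)*bk*rtv + 4*ck*qv + 2*dk*jj*qv*rv + (-2)*dk*jj*qtv*rtv)
      = 0" unfolding bk ck bl cl bm cm by (Groebner_Basis.algebra | (use jj in Groebner_Basis.algebra))
  show "(2*bk*jj*rtd + (-2)*bk*qtv*rtv*rtv + 4*bk*rh*rtv + (-4)*bl*rtv + 2*ck*jj*qd + (-4)*ck*qv*rh
      + 2*ck*qv*qv*rv + 4*cl*qv + (3/2)*dk*jj*qv*qv*rv*rv + (-3/2)*dk*jj*qtv*qtv*rtv*rtv + dk*qv*rd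
      + (-1)*dk*qd*rv + (-1)*dk*qtv*rtd + dk*qtd*rtv + 2*dl*jj*qv*rv + (-2)*dl*jj*qtv*rtv)
      = 0" unfolding bk ck bl cl bm cm by (Groebner_Basis.algebra | (use jj in Groebner_Basis.algebra))
qed

context darboux_data
begin

abbreviation Q :: "complex \<Rightarrow> real \<Rightarrow> real \<Rightarrow> complex mat" where
  "Q \<equiv> LaxQ \<rho> q r"

abbreviation new_Q :: "complex \<Rightarrow> real \<Rightarrow> real \<Rightarrow> complex mat" where
  "new_Q \<equiv> LaxQ \<rho> new_q new_r"

definition tdefect11 :: "real \<Rightarrow> real \<Rightarrow> complex poly" where
  "tdefect11 x t = pCons 0 (pCons 0 (pCons 0 (coeff_poly N (\<lambda>j. pdt (A1 j)) 0 x t)))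
     + coeff_poly N A1 1 x t * lax_Q1_poly \<rho> q r x t + pCons 0 (coeff_poly N A2 0 x t * lax_Q3_poly \<rho> q r x t)
     - lax_Q1_poly \<rho> new_q new_r x t * coeff_poly N A1 1 x t
     - pCons 0 (lax_Q2_poly \<rho> new_q new_r x t * coeff_poly N A3 0 x t)"

definition tdefect12 :: "real \<Rightarrow> real \<Rightarrow> complex poly" where
  "tdefect12 x t = pCons 0 (pCons 0 (pCons 0 (coeff_poly N (\<lambda>j. pdt (A2 j)) 0 x t)))
     + coeff_poly N A1 1 x t * lax_Q2_poly \<rho> q r x t
     - coeff_poly N A2 0 x t * (lax_Q1_poly \<rho> q r x t + lax_Q1_poly \<rho> new_q new_r x t)
     - lax_Q2_poly \<rho> new_q new_r x t * coeff_poly N A4 1 x t"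

definition tdefect21 :: "real \<Rightarrow> real \<Rightarrow> complex poly" where
  "tdefect21 x t = pCons 0 (pCons 0 (pCons 0 (coeff_poly N (\<lambda>j. pdt (A3 j)) 0 x t)))
     + coeff_poly N A3 0 x t * (lax_Q1_poly \<rho> q r x t + lax_Q1_poly \<rho> new_q new_r x t)
     + coeff_poly N A4 1 x t * lax_Q3_poly \<rho> q r x t
     - lax_Q3_poly \<rho> new_q new_r x t * coeff_poly N A1 1 x t"

definition tdefect22 :: "real \<Rightarrow> real \<Rightarrow> complex poly" where
  "tdefect22 x t = pCons 0 (pCons 0 (pCons 0 (coeff_poly N (\<lambda>j. pdt (A4 j)) 0 x t)))
     + pCons 0 (coeff_poly N A3 0 x t * lax_Q2_poly \<rho> q r x t) - coeff_poly N A4 1 x t * lax_Q1_poly \<rho> q r x t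
     - pCons 0 (lax_Q3_poly \<rho> new_q new_r x t * coeff_poly N A2 0 x t)
     + lax_Q1_poly \<rho> new_q new_r x t * coeff_poly N A4 1 x t"

lemma t_defect_as_poly:
  assumes lm: "lm \<noteq> 0"
  shows "mdt (T lm) x t + T lm x t * Q lm x t - new_Q lm x t * T lm x t
     = mat2 (inverse lm ^ 6 * poly (tdefect11 x t) (lm^2)) (inverse lm ^ 5 * poly (tdefect12 x t) (lm^2))
            (inverse lm ^ 5 * poly (tdefect21 x t) (lm^2)) (inverse lm ^ 6 * poly (tdefect22 x t) (lm^2))"
  unfolding mdt_darbouxT darbouxT_as_poly LaxQ_def LaxQ1_eq_poly[OF lm] LaxQ2_eq_poly[OF lm]
    LaxQ3_eq_poly[OF lm] mat2_mult mat2_add mat2_diff mat2_eq_iff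
    tdefect11_def tdefect12_def tdefect21_def tdefect22_def
  using lm by (simp add: field_simps) (intro conjI; Groebner_Basis.algebra)

lemma lowest_order_relations_fun:
  "(\<lambda>x t. q x t * ext_coeff N A1 1 0 x t - new_q x t * ext_coeff N A4 1 0 x t
      + 2 * \<i> * ext_coeff N A2 0 0 x t) = (\<lambda>x t. 0)"
  "(\<lambda>x t. r x t * ext_coeff N A4 1 0 x t - new_r x t * ext_coeff N A1 1 0 x t
      - 2 * \<i> * ext_coeff N A3 0 0 x t) = (\<lambda>x t. 0)"
  using lowest_order_relations by (simp_all add: fun_eq_iff)

lemma lowest_order_relations_pdx:
  "((ext_coeff N A1 1 0 x t)*(pdx q x t)
    + (-2)*(ext_coeff N A1 1 (Suc 0) x t)*(\<i>)*(q x t)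
    + 4*(ext_coeff N A2 0 0 x t)*(\<i>)*(\<i>)*(complex_of_real \<rho>)
    + (-1)*(ext_coeff N A2 0 0 x t)*(q x t)*(r x t)
    + (-1)*(ext_coeff N A2 0 0 x t)*(new_q x t)*(new_r x t)
    + (-4)*(ext_coeff N A2 0 (Suc 0) x t)*(\<i>)*(\<i>)
    + 2*(ext_coeff N A3 0 0 x t)*(q x t)*(new_q x t)
    + (-1)*(ext_coeff N A4 1 0 x t)*(pdx new_q x t)
    + 2*(ext_coeff N A4 1 (Suc 0) x t)*(\<i>)*(new_q x t)) = 0"
  "((-1)*(ext_coeff N A1 1 0 x t)*(pdx new_r x t)
    + (-2)*(ext_coeff N A1 1 (Suc 0) x t)*(\<i>)*(new_r x t)
    + 2*(ext_coeff N A2 0 0 x t)*(r x t)*(new_r x t)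
    + 4*(ext_coeff N A3 0 0 x t)*(\<i>)*(\<i>)*(complex_of_real \<rho>)
    + (-1)*(ext_coeff N A3 0 0 x t)*(q x t)*(r x t)
    + (-1)*(ext_coeff N A3 0 0 x t)*(new_q x t)*(new_r x t)
    + (-4)*(ext_coeff N A3 0 (Suc 0) x t)*(\<i>)*(\<i>) + (ext_coeff N A4 1 0 x t)*(pdx r x t)
    + 2*(ext_coeff N A4 1 (Suc 0) x t)*(\<i>)*(r x t)) = 0"
  by (rule pdx_zero_funD[OF lowest_order_relations_fun(1), where a=x and b=t]
      pdx_zero_funD[OF lowest_order_relations_fun(2), where a=x and b=t],
      (simp add: pdx_coefficients; (Groebner_Basis.algebra)?))+

lemma lowest_order_relations_pdx2:
  shows "((ext_coeff N A1 1 0 x t)*(pdx (pdx q) x t)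
    + (-2)*(ext_coeff N A1 1 (Suc 0) x t)*(\<i>)*(pdx q x t)
    + (-4)*(ext_coeff N A1 1 (Suc 0) x t)*(\<i>)*(\<i>)*(q x t)*(complex_of_real \<rho>)
    + 3*(ext_coeff N A1 1 (Suc 0) x t)*(q x t)*(new_q x t)*(new_r x t)
    + (ext_coeff N A1 1 (Suc 0) x t)*(q x t)*(q x t)*(r x t)
    + 4*(ext_coeff N A1 1 (Suc (Suc 0)) x t)*(\<i>)*(\<i>)*(q x t)
    + (-2)*(ext_coeff N A2 0 0 x t)*(\<i>)*(q x t)*(r x t)*(complex_of_real \<rho>)
    + (-2)*(ext_coeff N A2 0 0 x t)*(\<i>)*(new_q x t)*(complex_of_real \<rho>)*(new_r x t)
    + 8*(ext_coeff N A2 0 0 x t)*(\<i>)*(\<i>)*(\<i>)*(complex_of_real \<rho>)*(complex_of_real \<rho>)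
    + (-1)*(ext_coeff N A2 0 0 x t)*(q x t)*(pdx r x t)
    + (-2)*(ext_coeff N A2 0 0 x t)*(pdx q x t)*(r x t)
    + (-1)*(ext_coeff N A2 0 0 x t)*(new_q x t)*(pdx new_r x t)
    + (-2)*(ext_coeff N A2 0 0 x t)*(pdx new_q x t)*(new_r x t)
    + 4*(ext_coeff N A2 0 (Suc 0) x t)*(\<i>)*(q x t)*(r x t)
    + 4*(ext_coeff N A2 0 (Suc 0) x t)*(\<i>)*(new_q x t)*(new_r x t)
    + (-16)*(ext_coeff N A2 0 (Suc 0) x t)*(\<i>)*(\<i>)*(\<i>)*(complex_of_real \<rho>)
    + 8*(ext_coeff N A2 0 (Suc (Suc 0)) x t)*(\<i>)*(\<i>)*(\<i>)
    + (-4)*(ext_coeff N A3 0 0 x t)*(\<i>)*(q x t)*(new_q x t)*(complex_of_real \<rho>)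
    + 3*(ext_coeff N A3 0 0 x t)*(q x t)*(pdx new_q x t)
    + 3*(ext_coeff N A3 0 0 x t)*(pdx q x t)*(new_q x t)
    + (-1)*(ext_coeff N A4 1 0 x t)*(pdx (pdx new_q) x t)
    + 2*(ext_coeff N A4 1 (Suc 0) x t)*(\<i>)*(pdx new_q x t)
    + 4*(ext_coeff N A4 1 (Suc 0) x t)*(\<i>)*(\<i>)*(new_q x t)*(complex_of_real \<rho>)
    + (-3)*(ext_coeff N A4 1 (Suc 0) x t)*(q x t)*(new_q x t)*(r x t)
    + (-1)*(ext_coeff N A4 1 (Suc 0) x t)*(new_q x t)*(new_q x t)*(new_r x t)
    + (-4)*(ext_coeff N A4 1 (Suc (Suc 0)) x t)*(\<i>)*(\<i>)*(new_q x t)) = 0" (is ?DDR1)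
    and "((-1)*(ext_coeff N A1 1 0 x t)*(pdx (pdx new_r) x t)
    + (-2)*(ext_coeff N A1 1 (Suc 0) x t)*(\<i>)*(pdx new_r x t)
    + 4*(ext_coeff N A1 1 (Suc 0) x t)*(\<i>)*(\<i>)*(complex_of_real \<rho>)*(new_r x t)
    + (-3)*(ext_coeff N A1 1 (Suc 0) x t)*(q x t)*(r x t)*(new_r x t)
    + (-1)*(ext_coeff N A1 1 (Suc 0) x t)*(new_q x t)*(new_r x t)*(new_r x t)
    + (-4)*(ext_coeff N A1 1 (Suc (Suc 0)) x t)*(\<i>)*(\<i>)*(new_r x t)
    + 4*(ext_coeff N A2 0 0 x t)*(\<i>)*(r x t)*(complex_of_real \<rho>)*(new_r x t)
    + 3*(ext_coeff N A2 0 0 x t)*(r x t)*(pdx new_r x t)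
    + 3*(ext_coeff N A2 0 0 x t)*(pdx r x t)*(new_r x t)
    + 2*(ext_coeff N A3 0 0 x t)*(\<i>)*(q x t)*(r x t)*(complex_of_real \<rho>)
    + 2*(ext_coeff N A3 0 0 x t)*(\<i>)*(new_q x t)*(complex_of_real \<rho>)*(new_r x t)
    + (-8)*(ext_coeff N A3 0 0 x t)*(\<i>)*(\<i>)*(\<i>)*(complex_of_real \<rho>)*(complex_of_real \<rho>)
    + (-2)*(ext_coeff N A3 0 0 x t)*(q x t)*(pdx r x t)
    + (-1)*(ext_coeff N A3 0 0 x t)*(pdx q x t)*(r x t)
    + (-2)*(ext_coeff N A3 0 0 x t)*(new_q x t)*(pdx new_r x t)
    + (-1)*(ext_coeff N A3 0 0 x t)*(pdx new_q x t)*(new_r x t)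
    + (-4)*(ext_coeff N A3 0 (Suc 0) x t)*(\<i>)*(q x t)*(r x t)
    + (-4)*(ext_coeff N A3 0 (Suc 0) x t)*(\<i>)*(new_q x t)*(new_r x t)
    + 16*(ext_coeff N A3 0 (Suc 0) x t)*(\<i>)*(\<i>)*(\<i>)*(complex_of_real \<rho>)
    + (-8)*(ext_coeff N A3 0 (Suc (Suc 0)) x t)*(\<i>)*(\<i>)*(\<i>)
    + (ext_coeff N A4 1 0 x t)*(pdx (pdx r) x t)
    + 2*(ext_coeff N A4 1 (Suc 0) x t)*(\<i>)*(pdx r x t)
    + (-4)*(ext_coeff N A4 1 (Suc 0) x t)*(\<i>)*(\<i>)*(r x t)*(complex_of_real \<rho>)
    + (ext_coeff N A4 1 (Suc 0) x t)*(q x t)*(r x t)*(r x t)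
    + 3*(ext_coeff N A4 1 (Suc 0) x t)*(new_q x t)*(r x t)*(new_r x t)
    + 4*(ext_coeff N A4 1 (Suc (Suc 0)) x t)*(\<i>)*(\<i>)*(r x t)) = 0" (is ?DDR2)
proof -
  have DR_fun: "(\<lambda>x t. ((ext_coeff N A1 1 0 x t)*(pdx q x t)
      + (-2)*(ext_coeff N A1 1 (Suc 0) x t)*(\<i>)*(q x t)
      + 4*(ext_coeff N A2 0 0 x t)*(\<i>)*(\<i>)*(complex_of_real \<rho>)
      + (-1)*(ext_coeff N A2 0 0 x t)*(q x t)*(r x t)
      + (-1)*(ext_coeff N A2 0 0 x t)*(new_q x t)*(new_r x t)
      + (-4)*(ext_coeff N A2 0 (Suc 0) x t)*(\<i>)*(\<i>)
      + 2*(ext_coeff N A3 0 0 x t)*(q x t)*(new_q x t)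
      + (-1)*(ext_coeff N A4 1 0 x t)*(pdx new_q x t)
      + 2*(ext_coeff N A4 1 (Suc 0) x t)*(\<i>)*(new_q x t))) = (\<lambda>x t. 0)"
    "(\<lambda>x t. ((-1)*(ext_coeff N A1 1 0 x t)*(pdx new_r x t)
      + (-2)*(ext_coeff N A1 1 (Suc 0) x t)*(\<i>)*(new_r x t)
      + 2*(ext_coeff N A2 0 0 x t)*(r x t)*(new_r x t)
      + 4*(ext_coeff N A3 0 0 x t)*(\<i>)*(\<i>)*(complex_of_real \<rho>)
      + (-1)*(ext_coeff N A3 0 0 x t)*(q x t)*(r x t)
      + (-1)*(ext_coeff N A3 0 0 x t)*(new_q x t)*(new_r x t)
      + (-4)*(ext_coeff N A3 0 (Suc 0) x t)*(\<i>)*(\<i>) + (ext_coeff N A4 1 0 x t)*(pdx r x t)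
      + 2*(ext_coeff N A4 1 (Suc 0) x t)*(\<i>)*(r x t))) = (\<lambda>x t. 0)"
    using lowest_order_relations_pdx by (simp_all add: fun_eq_iff)
  show ?DDR1 ?DDR2
    by (rule pdx_zero_funD[OF DR_fun(1), where a=x and b=t] pdx_zero_funD[OF DR_fun(2), where a=x and b=t],
        (simp add: pdx_coefficients; (Groebner_Basis.algebra)?))+
qed

lemma tdefect_low_coeffs_explicit:
  shows "coeff (tdefect11 x t) (Suc 0)
      = ((-2)*(ext_coeff N A1 1 0 x t)*(\<i>)*(q x t)*(r x t)
      + 2*(ext_coeff N A1 1 0 x t)*(\<i>)*(new_q x t)*(new_r x t)
      + 4*(ext_coeff N A2 0 0 x t)*(r x t) + (-4)*(ext_coeff N A3 0 0 x t)*(new_q x t))"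
    and "coeff (tdefect11 x t) (Suc (Suc 0))
      = ((-3/2)*(ext_coeff N A1 1 0 x t)*(\<i>)*(q x t)*(q x t)*(r x t)*(r x t)
      + (3/2)*(ext_coeff N A1 1 0 x t)*(\<i>)*(new_q x t)*(new_q x t)*(new_r x t)*(new_r x t)
      + (-1)*(ext_coeff N A1 1 0 x t)*(q x t)*(pdx r x t)
      + (ext_coeff N A1 1 0 x t)*(pdx q x t)*(r x t)
      + (ext_coeff N A1 1 0 x t)*(new_q x t)*(pdx new_r x t)
      + (-1)*(ext_coeff N A1 1 0 x t)*(pdx new_q x t)*(new_r x t)
      + (-2)*(ext_coeff N A1 1 (Suc 0) x t)*(\<i>)*(q x t)*(r x t)
      + 2*(ext_coeff N A1 1 (Suc 0) x t)*(\<i>)*(new_q x t)*(new_r x t)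
      + (-2)*(ext_coeff N A2 0 0 x t)*(\<i>)*(pdx r x t)
      + 2*(ext_coeff N A2 0 0 x t)*(q x t)*(r x t)*(r x t)
      + (-4)*(ext_coeff N A2 0 0 x t)*(r x t)*(complex_of_real \<rho>)
      + 4*(ext_coeff N A2 0 (Suc 0) x t)*(r x t)
      + (-2)*(ext_coeff N A3 0 0 x t)*(\<i>)*(pdx new_q x t)
      + 4*(ext_coeff N A3 0 0 x t)*(new_q x t)*(complex_of_real \<rho>)
      + (-2)*(ext_coeff N A3 0 0 x t)*(new_q x t)*(new_q x t)*(new_r x t)
      + (-4)*(ext_coeff N A3 0 (Suc 0) x t)*(new_q x t))"
    and "coeff (tdefect12 x t) 0 = (4*(ext_coeff N A1 1 0 x t)*(q x t)
      + 8*(ext_coeff N A2 0 0 x t)*(\<i>) + (-4)*(ext_coeff N A4 1 0 x t)*(new_q x t))"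
    and "coeff (tdefect12 x t) (Suc 0) = (2*(ext_coeff N A1 1 0 x t)*(\<i>)*(pdx q x t)
      + (-4)*(ext_coeff N A1 1 0 x t)*(q x t)*(complex_of_real \<rho>)
      + 2*(ext_coeff N A1 1 0 x t)*(q x t)*(q x t)*(r x t)
      + 4*(ext_coeff N A1 1 (Suc 0) x t)*(q x t) + 2*(ext_coeff N A2 0 0 x t)*(\<i>)*(q x t)*(r x t)
      + 2*(ext_coeff N A2 0 0 x t)*(\<i>)*(new_q x t)*(new_r x t)
      + (-16)*(ext_coeff N A2 0 0 x t)*(\<i>)*(complex_of_real \<rho>)
      + 8*(ext_coeff N A2 0 (Suc 0) x t)*(\<i>)
      + (-2)*(ext_coeff N A4 1 0 x t)*(\<i>)*(pdx new_q x t)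
      + 4*(ext_coeff N A4 1 0 x t)*(new_q x t)*(complex_of_real \<rho>)
      + (-2)*(ext_coeff N A4 1 0 x t)*(new_q x t)*(new_q x t)*(new_r x t)
      + (-4)*(ext_coeff N A4 1 (Suc 0) x t)*(new_q x t))"
    and "coeff (tdefect12 x t) (Suc (Suc 0))
      = (3*(ext_coeff N A1 1 0 x t)*(\<i>)*(q x t)*(pdx q x t)*(r x t)
      + (-4)*(ext_coeff N A1 1 0 x t)*(q x t)*(complex_of_real \<rho>)*(complex_of_real \<rho>)
      + 2*(ext_coeff N A1 1 0 x t)*(q x t)*(q x t)*(r x t)*(complex_of_real \<rho>)
      + (3/2)*(ext_coeff N A1 1 0 x t)*(q x t)*(q x t)*(q x t)*(r x t)*(r x t)
      + (-1)*(ext_coeff N A1 1 0 x t)*(pdx (pdx q) x t)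
      + 2*(ext_coeff N A1 1 (Suc 0) x t)*(\<i>)*(pdx q x t)
      + (-4)*(ext_coeff N A1 1 (Suc 0) x t)*(q x t)*(complex_of_real \<rho>)
      + 2*(ext_coeff N A1 1 (Suc 0) x t)*(q x t)*(q x t)*(r x t)
      + 4*(ext_coeff N A1 1 (Suc (Suc 0)) x t)*(q x t)
      + (3/2)*(ext_coeff N A2 0 0 x t)*(\<i>)*(q x t)*(q x t)*(r x t)*(r x t)
      + (3/2)*(ext_coeff N A2 0 0 x t)*(\<i>)*(new_q x t)*(new_q x t)*(new_r x t)*(new_r x t)
      + (ext_coeff N A2 0 0 x t)*(q x t)*(pdx r x t)
      + (-1)*(ext_coeff N A2 0 0 x t)*(pdx q x t)*(r x t)
      + (ext_coeff N A2 0 0 x t)*(new_q x t)*(pdx new_r x t)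
      + (-1)*(ext_coeff N A2 0 0 x t)*(pdx new_q x t)*(new_r x t)
      + 2*(ext_coeff N A2 0 (Suc 0) x t)*(\<i>)*(q x t)*(r x t)
      + 2*(ext_coeff N A2 0 (Suc 0) x t)*(\<i>)*(new_q x t)*(new_r x t)
      + (-16)*(ext_coeff N A2 0 (Suc 0) x t)*(\<i>)*(complex_of_real \<rho>)
      + 8*(ext_coeff N A2 0 (Suc (Suc 0)) x t)*(\<i>)
      + (-3)*(ext_coeff N A4 1 0 x t)*(\<i>)*(new_q x t)*(pdx new_q x t)*(new_r x t)
      + 4*(ext_coeff N A4 1 0 x t)*(new_q x t)*(complex_of_real \<rho>)*(complex_of_real \<rho>)
      + (-2)*(ext_coeff N A4 1 0 x t)*(new_q x t)*(new_q x t)*(complex_of_real \<rho>)*(new_r x t)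
      + (-3/2)*(ext_coeff N A4 1 0 x t)*(new_q x t)*(new_q x t)*(new_q x t)*(new_r x t)*(new_r x t)
      + (ext_coeff N A4 1 0 x t)*(pdx (pdx new_q) x t)
      + (-2)*(ext_coeff N A4 1 (Suc 0) x t)*(\<i>)*(pdx new_q x t)
      + 4*(ext_coeff N A4 1 (Suc 0) x t)*(new_q x t)*(complex_of_real \<rho>)
      + (-2)*(ext_coeff N A4 1 (Suc 0) x t)*(new_q x t)*(new_q x t)*(new_r x t)
      + (-4)*(ext_coeff N A4 1 (Suc (Suc 0)) x t)*(new_q x t))"
    and "coeff (tdefect21 x t) 0 = ((-4)*(ext_coeff N A1 1 0 x t)*(new_r x t)
      + (-8)*(ext_coeff N A3 0 0 x t)*(\<i>) + 4*(ext_coeff N A4 1 0 x t)*(r x t))"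
    and "coeff (tdefect21 x t) (Suc 0) = (2*(ext_coeff N A1 1 0 x t)*(\<i>)*(pdx new_r x t)
      + (-2)*(ext_coeff N A1 1 0 x t)*(new_q x t)*(new_r x t)*(new_r x t)
      + 4*(ext_coeff N A1 1 0 x t)*(complex_of_real \<rho>)*(new_r x t)
      + (-4)*(ext_coeff N A1 1 (Suc 0) x t)*(new_r x t)
      + (-2)*(ext_coeff N A3 0 0 x t)*(\<i>)*(q x t)*(r x t)
      + (-2)*(ext_coeff N A3 0 0 x t)*(\<i>)*(new_q x t)*(new_r x t)
      + 16*(ext_coeff N A3 0 0 x t)*(\<i>)*(complex_of_real \<rho>)
      + (-8)*(ext_coeff N A3 0 (Suc 0) x t)*(\<i>)
      + (-2)*(ext_coeff N A4 1 0 x t)*(\<i>)*(pdx r x t)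
      + 2*(ext_coeff N A4 1 0 x t)*(q x t)*(r x t)*(r x t)
      + (-4)*(ext_coeff N A4 1 0 x t)*(r x t)*(complex_of_real \<rho>)
      + 4*(ext_coeff N A4 1 (Suc 0) x t)*(r x t))"
    and "coeff (tdefect21 x t) (Suc (Suc 0))
      = (3*(ext_coeff N A1 1 0 x t)*(\<i>)*(new_q x t)*(new_r x t)*(pdx new_r x t)
      + (-2)*(ext_coeff N A1 1 0 x t)*(new_q x t)*(complex_of_real \<rho>)*(new_r x t)*(new_r x t)
      + (-3/2)*(ext_coeff N A1 1 0 x t)*(new_q x t)*(new_q x t)*(new_r x t)*(new_r x t)*(new_r x t)
      + 4*(ext_coeff N A1 1 0 x t)*(complex_of_real \<rho>)*(complex_of_real \<rho>)*(new_r x t)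
      + (ext_coeff N A1 1 0 x t)*(pdx (pdx new_r) x t)
      + 2*(ext_coeff N A1 1 (Suc 0) x t)*(\<i>)*(pdx new_r x t)
      + (-2)*(ext_coeff N A1 1 (Suc 0) x t)*(new_q x t)*(new_r x t)*(new_r x t)
      + 4*(ext_coeff N A1 1 (Suc 0) x t)*(complex_of_real \<rho>)*(new_r x t)
      + (-4)*(ext_coeff N A1 1 (Suc (Suc 0)) x t)*(new_r x t)
      + (-3/2)*(ext_coeff N A3 0 0 x t)*(\<i>)*(q x t)*(q x t)*(r x t)*(r x t)
      + (-3/2)*(ext_coeff N A3 0 0 x t)*(\<i>)*(new_q x t)*(new_q x t)*(new_r x t)*(new_r x t)
      + (-1)*(ext_coeff N A3 0 0 x t)*(q x t)*(pdx r x t)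
      + (ext_coeff N A3 0 0 x t)*(pdx q x t)*(r x t)
      + (-1)*(ext_coeff N A3 0 0 x t)*(new_q x t)*(pdx new_r x t)
      + (ext_coeff N A3 0 0 x t)*(pdx new_q x t)*(new_r x t)
      + (-2)*(ext_coeff N A3 0 (Suc 0) x t)*(\<i>)*(q x t)*(r x t)
      + (-2)*(ext_coeff N A3 0 (Suc 0) x t)*(\<i>)*(new_q x t)*(new_r x t)
      + 16*(ext_coeff N A3 0 (Suc 0) x t)*(\<i>)*(complex_of_real \<rho>)
      + (-8)*(ext_coeff N A3 0 (Suc (Suc 0)) x t)*(\<i>)
      + (-3)*(ext_coeff N A4 1 0 x t)*(\<i>)*(q x t)*(r x t)*(pdx r x t)
      + 2*(ext_coeff N A4 1 0 x t)*(q x t)*(r x t)*(r x t)*(complex_of_real \<rho>)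
      + (3/2)*(ext_coeff N A4 1 0 x t)*(q x t)*(q x t)*(r x t)*(r x t)*(r x t)
      + (-4)*(ext_coeff N A4 1 0 x t)*(r x t)*(complex_of_real \<rho>)*(complex_of_real \<rho>)
      + (-1)*(ext_coeff N A4 1 0 x t)*(pdx (pdx r) x t)
      + (-2)*(ext_coeff N A4 1 (Suc 0) x t)*(\<i>)*(pdx r x t)
      + 2*(ext_coeff N A4 1 (Suc 0) x t)*(q x t)*(r x t)*(r x t)
      + (-4)*(ext_coeff N A4 1 (Suc 0) x t)*(r x t)*(complex_of_real \<rho>)
      + 4*(ext_coeff N A4 1 (Suc (Suc 0)) x t)*(r x t))"
    and "coeff (tdefect22 x t) (Suc 0) = ((-4)*(ext_coeff N A2 0 0 x t)*(new_r x t)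
      + 4*(ext_coeff N A3 0 0 x t)*(q x t) + 2*(ext_coeff N A4 1 0 x t)*(\<i>)*(q x t)*(r x t)
      + (-2)*(ext_coeff N A4 1 0 x t)*(\<i>)*(new_q x t)*(new_r x t))"
    and "coeff (tdefect22 x t) (Suc (Suc 0))
      = (2*(ext_coeff N A2 0 0 x t)*(\<i>)*(pdx new_r x t)
      + (-2)*(ext_coeff N A2 0 0 x t)*(new_q x t)*(new_r x t)*(new_r x t)
      + 4*(ext_coeff N A2 0 0 x t)*(complex_of_real \<rho>)*(new_r x t)
      + (-4)*(ext_coeff N A2 0 (Suc 0) x t)*(new_r x t)
      + 2*(ext_coeff N A3 0 0 x t)*(\<i>)*(pdx q x t)
      + (-4)*(ext_coeff N A3 0 0 x t)*(q x t)*(complex_of_real \<rho>)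
      + 2*(ext_coeff N A3 0 0 x t)*(q x t)*(q x t)*(r x t)
      + 4*(ext_coeff N A3 0 (Suc 0) x t)*(q x t)
      + (3/2)*(ext_coeff N A4 1 0 x t)*(\<i>)*(q x t)*(q x t)*(r x t)*(r x t)
      + (-3/2)*(ext_coeff N A4 1 0 x t)*(\<i>)*(new_q x t)*(new_q x t)*(new_r x t)*(new_r x t)
      + (ext_coeff N A4 1 0 x t)*(q x t)*(pdx r x t)
      + (-1)*(ext_coeff N A4 1 0 x t)*(pdx q x t)*(r x t)
      + (-1)*(ext_coeff N A4 1 0 x t)*(new_q x t)*(pdx new_r x t)
      + (ext_coeff N A4 1 0 x t)*(pdx new_q x t)*(new_r x t)
      + 2*(ext_coeff N A4 1 (Suc 0) x t)*(\<i>)*(q x t)*(r x t)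
      + (-2)*(ext_coeff N A4 1 (Suc 0) x t)*(\<i>)*(new_q x t)*(new_r x t))"
  by (simp add: tdefect11_def tdefect12_def tdefect21_def tdefect22_def
      lax_Q1_poly_def lax_Q2_poly_def lax_Q3_poly_def; (Groebner_Basis.algebra)?)+

lemma tdefect_coeffs_0_1_2:
  shows "coeff (tdefect11 x t) 0 = 0"
    and "coeff (tdefect11 x t) (Suc 0) = 0"
    and "coeff (tdefect11 x t) (Suc (Suc 0)) = 0"
    and "coeff (tdefect12 x t) 0 = 0"
    and "coeff (tdefect12 x t) (Suc 0) = 0"
    and "coeff (tdefect12 x t) (Suc (Suc 0)) = 0"
    and "coeff (tdefect21 x t) 0 = 0"
    and "coeff (tdefect21 x t) (Suc 0) = 0"
    and "coeff (tdefect21 x t) (Suc (Suc 0)) = 0"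
    and "coeff (tdefect22 x t) 0 = 0"
    and "coeff (tdefect22 x t) (Suc 0) = 0"
    and "coeff (tdefect22 x t) (Suc (Suc 0)) = 0"
proof -
  note explicit = tdefect_low_coeffs_explicit[of x t]
  have ii: "\<i> * \<i> = (-1::complex)" by simp
  note L = lowest_tdefect_coeffs_algebra[where
      ak = "ext_coeff N A1 1 0 x t" and al = "ext_coeff N A1 1 (Suc 0) x t"
      and am = "ext_coeff N A1 1 (Suc (Suc 0)) x t"
      and bk = "ext_coeff N A2 0 0 x t" and bl = "ext_coeff N A2 0 (Suc 0) x t"
      and bm = "ext_coeff N A2 0 (Suc (Suc 0)) x t"
      and ck = "ext_coeff N A3 0 0 x t" and cl = "ext_coeff N A3 0 (Suc 0) x t"
      and cm = "ext_coeff N A3 0 (Suc (Suc 0)) x t"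
      and dk = "ext_coeff N A4 1 0 x t" and dl = "ext_coeff N A4 1 (Suc 0) x t"
      and dm = "ext_coeff N A4 1 (Suc (Suc 0)) x t"
      and qv = "q x t" and qd = "pdx q x t" and qdd = "pdx (pdx q) x t"
      and qtv = "new_q x t" and qtd = "pdx new_q x t" and qtdd = "pdx (pdx new_q) x t"
      and rv = "r x t" and rd = "pdx r x t" and rdd = "pdx (pdx r) x t"
      and rtv = "new_r x t" and rtd = "pdx new_r x t" and rtdd = "pdx (pdx new_r) x t"
      and rh = "complex_of_real \<rho>" and jj = "\<i>",
      OF ii lowest_order_relations(1) lowest_order_relations_pdx(1)
        lowest_order_relations_pdx2(1) lowest_order_relations(2) lowest_order_relations_pdx(2)
        lowest_order_relations_pdx2(2)]
  show "coeff (tdefect11 x t) 0 = 0" "coeff (tdefect22 x t) 0 = 0"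
    by (simp_all add: tdefect11_def tdefect22_def lax_Q1_poly_def lax_Q2_poly_def lax_Q3_poly_def)
  show "coeff (tdefect11 x t) (Suc 0) = 0" "coeff (tdefect11 x t) (Suc (Suc 0)) = 0"
    "coeff (tdefect12 x t) 0 = 0" "coeff (tdefect12 x t) (Suc 0) = 0"
    "coeff (tdefect12 x t) (Suc (Suc 0)) = 0"
    "coeff (tdefect21 x t) 0 = 0" "coeff (tdefect21 x t) (Suc 0) = 0"
    "coeff (tdefect21 x t) (Suc (Suc 0)) = 0"
    "coeff (tdefect22 x t) (Suc 0) = 0" "coeff (tdefect22 x t) (Suc (Suc 0)) = 0"
    using explicit L by simp_all
qed

lemma tdefect_high_coeffs:
  assumes "N + 3 \<le> n"
  shows "coeff (tdefect11 x t) n = 0" "coeff (tdefect12 x t) n = 0"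
    "coeff (tdefect21 x t) n = 0" "coeff (tdefect22 x t) n = 0"
proof -
  obtain j where j: "n = Suc (Suc (Suc j))" "N \<le> j"
    using assms by (metis add.commute add_Suc_right le_Suc_ex numeral_3_eq_3 add_0_right le_add1)
  then show "coeff (tdefect11 x t) n = 0" "coeff (tdefect12 x t) n = 0"
    "coeff (tdefect21 x t) n = 0" "coeff (tdefect22 x t) n = 0"
    by (simp_all add: tdefect11_def tdefect12_def tdefect21_def tdefect22_def
        lax_Q1_poly_def lax_Q2_poly_def lax_Q3_poly_def ext_coeff_apply)
qed

lemma tdefect_coeffs_below_3:
  assumes "n < 3"
  shows "coeff (tdefect11 x t) n = 0" "coeff (tdefect12 x t) n = 0"
    "coeff (tdefect21 x t) n = 0" "coeff (tdefect22 x t) n = 0"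
  using assms tdefect_coeffs_0_1_2[of x t] by (auto simp: numeral_3_eq_3 less_Suc_eq)

lemma tdefect_at_spectral_parameter:
  assumes k: "k < 2*N"
  shows "inverse (lam k) ^ 6 * poly (tdefect11 x t) (lam k^2) * phi1 k x t
      + inverse (lam k) ^ 5 * poly (tdefect12 x t) (lam k^2) * phi2 k x t = 0"
    "inverse (lam k) ^ 5 * poly (tdefect21 x t) (lam k^2) * phi1 k x t
      + inverse (lam k) ^ 6 * poly (tdefect22 x t) (lam k^2) * phi2 k x t = 0"
  using t_defect_annihilates[OF k, of "new_Q (lam k) x t" x t]
  unfolding t_defect_as_poly[OF lam_nonzeroD[OF k]] mat2_mult_cvec2 zero_cvec2 cvec2_eq_iff by auto

lemma tdefect_coeffs_zero:
  "coeff (tdefect11 x t) n = 0" "coeff (tdefect12 x t) n = 0"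
  "coeff (tdefect21 x t) n = 0" "coeff (tdefect22 x t) n = 0"
proof -
  have "coeff (tdefect11 x t) n = 0 \<and> coeff (tdefect12 x t) n = 0 \<and>
        coeff (tdefect21 x t) n = 0 \<and> coeff (tdefect22 x t) n = 0"
  proof (cases "3 \<le> n \<and> n < N + 3")
    case True
    then obtain j where n: "n = j + 3" and j: "j < N"
      by (metis add.commute le_Suc_ex add_less_cancel_left)
    have "coeff (tdefect11 x t) (j+3) = 0 \<and> coeff (tdefect12 x t) (j+3) = 0"
    proof (rule B12_kernel_trivial[where u="\<lambda>j. coeff (tdefect11 x t) (j+3)"
          and v="\<lambda>j. coeff (tdefect12 x t) (j+3)"])
      fix k assume k: "k < 2*N"
      show "(\<Sum>j<N. coeff (tdefect11 x t) (j+3) * lam k ^ (2*j) * phi1 k x t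
          + coeff (tdefect12 x t) (j+3) * lam k ^ (2*j+1) * phi2 k x t) = 0"
        using tdefect_at_spectral_parameter(1)[OF k] poly_pair_shift3_eq_sum_even_odd[OF lam_nonzeroD[OF k]
            tdefect_coeffs_below_3(1) tdefect_high_coeffs(1) tdefect_coeffs_below_3(2) tdefect_high_coeffs(2)]
        by simp
    qed (rule j)
    moreover have "coeff (tdefect21 x t) (j+3) = 0 \<and> coeff (tdefect22 x t) (j+3) = 0"
    proof (rule B22_kernel_trivial[where u="\<lambda>j. coeff (tdefect21 x t) (j+3)"
          and v="\<lambda>j. coeff (tdefect22 x t) (j+3)"])
      fix k assume k: "k < 2*N"
      show "(\<Sum>j<N. coeff (tdefect21 x t) (j+3) * lam k ^ (2*j+1) * phi1 k x t
          + coeff (tdefect22 x t) (j+3) * lam k ^ (2*j) * phi2 k x t) = 0"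
        using tdefect_at_spectral_parameter(2)[OF k] poly_pair_shift3_eq_sum_odd_even[OF lam_nonzeroD[OF k]
            tdefect_coeffs_below_3(3) tdefect_high_coeffs(3) tdefect_coeffs_below_3(4) tdefect_high_coeffs(4)]
        by simp
    qed (rule j)
    ultimately show ?thesis unfolding n by blast
  next
    case False
    then show ?thesis
      using tdefect_coeffs_below_3 tdefect_high_coeffs by (meson not_le)
  qed
  then show "coeff (tdefect11 x t) n = 0" "coeff (tdefect12 x t) n = 0"
    "coeff (tdefect21 x t) n = 0" "coeff (tdefect22 x t) n = 0"
    by blast+
qed

theorem darboux_t_part:
  assumes "lm \<noteq> 0"
  shows "mdt (T lm) x t + T lm x t * Q lm x t = new_Q lm x t * T lm x t"
proof -
  have "tdefect11 x t = 0" "tdefect12 x t = 0" "tdefect21 x t = 0" "tdefect22 x t = 0"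
    by (simp_all add: poly_eq_iff tdefect_coeffs_zero)
  then have "mdt (T lm) x t + T lm x t * Q lm x t - new_Q lm x t * T lm x t = 0\<^sub>m 2 2"
    by (simp add: t_defect_as_poly[OF assms] zero_mat2)
  then show ?thesis
    by (subst (asm) diff_eq_zero_mat_iff[of _ 2 2]) (auto intro!: mult_carrier_mat[where n=2] add_carrier_mat)
qed

end

section \<open>The new potentials solve the coupled system\<close>

lemma continuous_vanishing_off_finite:
  fixes F :: "complex \<Rightarrow> complex"
  assumes "continuous (at a) F" and "finite S" and "\<And>z. z \<notin> S \<Longrightarrow> F z = 0"
  shows "F a = 0"
proof -
  have "eventually (\<lambda>y. y \<notin> S) (at a)"
    using islimpt_finite[OF assms(2), of a] islimpt_iff_eventually by blast
  then have "eventually (\<lambda>y. F y = 0) (at a)"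
    by (rule eventually_mono) (use assms(3) in auto)
  then have "(F \<longlongrightarrow> 0) (at a)" by (rule tendsto_eventually)
  moreover have "(F \<longlongrightarrow> F a) (at a)" using assms(1) by (simp add: continuous_at)
  ultimately show ?thesis using tendsto_unique[OF at_neq_bot] by blast
qed

context darboux_data
begin

abbreviation P :: "complex \<Rightarrow> real \<Rightarrow> real \<Rightarrow> complex mat" where
  "P \<equiv> LaxP \<rho> q r"

abbreviation new_P :: "complex \<Rightarrow> real \<Rightarrow> real \<Rightarrow> complex mat" where
  "new_P \<equiv> LaxP \<rho> new_q new_r"

lemma mdx_darbouxT_eq: "lm \<noteq> 0 \<Longrightarrow> mdx (T lm) = (\<lambda>x t. new_P lm x t * T lm x t - T lm x t * P lm x t)"
  by (intro ext eq_diff_mat_if_add_eq[of _ 2 2, OF _ _ darboux_x_part]) (auto intro!: mult_carrier_mat[where n=2])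

lemma mdt_darbouxT_eq: "lm \<noteq> 0 \<Longrightarrow> mdt (T lm) = (\<lambda>x t. new_Q lm x t * T lm x t - T lm x t * Q lm x t)"
  by (intro ext eq_diff_mat_if_add_eq[of _ 2 2, OF _ _ darboux_t_part]) (auto intro!: mult_carrier_mat[where n=2])

text \<open>
  Cross-differentiating \<open>T\<^sub>x = P[N] T - T P\<close> and \<open>T\<^sub>t = Q[N] T - T Q\<close> shows that the
  zero-curvature defect of the new potentials times \<open>T\<close> equals \<open>T\<close> times that of the old ones.
\<close>

lemma new_curvature_mult_T:
  assumes lm: "lm \<noteq> 0"
  shows "(mdt (new_P lm) x t - mdx (new_Q lm) x t
      + (new_P lm x t * new_Q lm x t - new_Q lm x t * new_P lm x t)) * T lm x t = 0\<^sub>m 2 2"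
proof -
  have smooth: "smooth_mat2 (T lm)" "smooth_mat2 (P lm)" "smooth_mat2 (new_P lm)"
    "smooth_mat2 (Q lm)" "smooth_mat2 (new_Q lm)"
    by (simp_all add: smooth_mat2_T smooth_mat2_LaxP smooth_mat2_LaxQ)
  have Txt: "mdt (mdx (T lm)) x t = mdt (new_P lm) x t * T lm x t + new_P lm x t * mdt (T lm) x t
      - (mdt (T lm) x t * P lm x t + T lm x t * mdt (P lm) x t)"
    unfolding mdx_darbouxT_eq[OF lm] by (simp add: mdt_diff mdt_mult smooth_mat2_mult smooth)
  have Ttx: "mdx (mdt (T lm)) x t = mdx (new_Q lm) x t * T lm x t + new_Q lm x t * mdx (T lm) x t
      - (mdx (T lm) x t * Q lm x t + T lm x t * mdx (Q lm) x t)"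
    unfolding mdt_darbouxT_eq[OF lm] by (simp add: mdx_diff mdx_mult smooth_mat2_mult smooth)
  have old_zero_curvature: "mdt (P lm) x t - mdx (Q lm) x t + (P lm x t * Q lm x t - Q lm x t * P lm x t)
      = 0\<^sub>m 2 2"
    using solves lm by (simp add: solves_coupled_def)
  have "(mdt (new_P lm) x t - mdx (new_Q lm) x t
      + (new_P lm x t * new_Q lm x t - new_Q lm x t * new_P lm x t)) * T lm x t
      = T lm x t * (mdt (P lm) x t - mdx (Q lm) x t + (P lm x t * Q lm x t - Q lm x t * P lm x t))"
    using mdt_mdx_commute[OF smooth(1), of x t] Txt Ttx
    by (intro curvature_intertwining[where Tx="mdx (T lm) x t" and Tt="mdt (T lm) x t"])
      (simp_all add: mdx_darbouxT_eq[OF lm] mdt_darbouxT_eq[OF lm])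
  also have "\<dots> = 0\<^sub>m 2 2"
    unfolding old_zero_curvature by (rule right_mult_zero_mat[OF darbouxT_carrier])
  finally show ?thesis .
qed

definition det_poly :: "real \<Rightarrow> real \<Rightarrow> complex poly" where
  "det_poly x t = coeff_poly N A1 1 x t * coeff_poly N A4 1 x t
     - pCons 0 (coeff_poly N A2 0 x t * coeff_poly N A3 0 x t)"

lemma det_darbouxT: "T lm x t $$ (0,0) * T lm x t $$ (1,1) - T lm x t $$ (0,1) * T lm x t $$ (1,0)
    = poly (det_poly x t) (lm^2)"
  unfolding darbouxT_as_poly det_poly_def mat2_index by (simp add: power2_eq_square algebra_simps)

lemma det_poly_leading_coeff: "coeff (det_poly x t) (2*N) = 1"
proof -
  have "coeff (coeff_poly N A1 1 x t * coeff_poly N A4 1 x t) (2*N)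
      = (\<Sum>i\<le>2*N. ext_coeff N A1 1 i x t * ext_coeff N A4 1 (2*N - i) x t)"
    by (simp add: coeff_mult)
  also have "\<dots> = (\<Sum>i\<le>2*N. if i = N then 1 else 0)"
    by (rule sum.cong) (auto simp: ext_coeff_apply)
  finally have diag: "coeff (coeff_poly N A1 1 x t * coeff_poly N A4 1 x t) (2*N) = 1"
    by simp
  obtain m where m: "2*N = Suc m" "m = 2*N - 1"
    using N_pos by (cases "2*N") auto
  have "coeff (pCons 0 (coeff_poly N A2 0 x t * coeff_poly N A3 0 x t)) (2*N)
      = (\<Sum>i\<le>m. ext_coeff N A2 0 i x t * ext_coeff N A3 0 (m - i) x t)"
    unfolding m(1) by (simp add: coeff_mult)
  also have "\<dots> = 0"
    by (rule sum.neutral) (use m in \<open>auto simp: ext_coeff_apply\<close>)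
  finally show ?thesis
    unfolding det_poly_def using diag by simp
qed

lemma finite_det_roots: "finite {lm. poly (det_poly x t) (lm^2) = 0}"
proof -
  have "det_poly x t \<noteq> 0"
    using det_poly_leading_coeff[of x t] by auto
  then have "pcompose (det_poly x t) [:0, 0, 1:] \<noteq> 0"
    using pcompose_eq_0[of "det_poly x t" "[:0, 0, 1:]"] by auto
  then have "finite {lm. poly (pcompose (det_poly x t) [:0, 0, 1:]) lm = 0}"
    by (rule poly_roots_finite)
  moreover have "poly (pcompose (det_poly x t) [:0, 0, 1:]) lm = poly (det_poly x t) (lm^2)" for lm
    by (simp add: poly_pcompose power2_eq_square)
  ultimately show ?thesis by simp
qed

text \<open>
  Away from the finitely many zeros of \<open>det T\<close> the new zero-curvature defect vanishes by
  \<open>new_curvature_mult_T\<close>; it is continuous in \<open>\<lambda> \<noteq> 0\<close>, hence vanishes everywhere.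
\<close>

lemma new_zero_curvature:
  assumes lm0: "lm0 \<noteq> 0"
  shows "mdt (new_P lm0) x t - mdx (new_Q lm0) x t
      + (new_P lm0 x t * new_Q lm0 x t - new_Q lm0 x t * new_P lm0 x t) = 0\<^sub>m 2 2"
proof -
  define Z where "Z lm = mdt (new_P lm) x t - mdx (new_Q lm) x t
      + (new_P lm x t * new_Q lm x t - new_Q lm x t * new_P lm x t)" for lm
  define S where "S = insert 0 {lm. poly (det_poly x t) (lm^2) = 0}"
  have S: "finite S"
    unfolding S_def using finite_det_roots by simp
  have Z_eta: "Z lm = mat2 (Z lm $$ (0,0)) (Z lm $$ (0,1)) (Z lm $$ (1,0)) (Z lm $$ (1,1))" for lm
    unfolding Z_def by (intro mat2_eta add_carrier_mat minus_carrier_mat mult_carrier_mat[where n=2]) simp_all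
  have Z_zero: "Z lm $$ (0,0) = 0 \<and> Z lm $$ (0,1) = 0 \<and> Z lm $$ (1,0) = 0 \<and> Z lm $$ (1,1) = 0"
    if "lm \<notin> S" for lm
  proof (rule mat2_mult_eq_zero_cancel)
    have lm: "lm \<noteq> 0" and det: "poly (det_poly x t) (lm^2) \<noteq> 0"
      using that by (auto simp: S_def)
    show "mat2 (Z lm $$ (0,0)) (Z lm $$ (0,1)) (Z lm $$ (1,0)) (Z lm $$ (1,1))
        * mat2 (T lm x t $$ (0,0)) (T lm x t $$ (0,1)) (T lm x t $$ (1,0)) (T lm x t $$ (1,1)) = mat2 0 0 0 0"
      using new_curvature_mult_T[OF lm, of x t] Z_eta[of lm] mat2_eta[OF darbouxT_carrier, of N A1 A2 A3 A4 lm x t]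
      unfolding Z_def zero_mat2 by simp
    show "T lm x t $$ (0,0) * T lm x t $$ (1,1) - T lm x t $$ (0,1) * T lm x t $$ (1,0) \<noteq> 0"
      using det det_darbouxT by simp
  qed
  have Z_expanded: "Z lm = mat2 0 (pdt new_q x t * inverse lm) (pdt new_r x t * inverse lm) 0
     - mat2 (pdx (LaxQ1 \<rho> new_q new_r lm) x t) (pdx (LaxQ2 \<rho> new_q new_r lm) x t)
         (pdx (LaxQ3 \<rho> new_q new_r lm) x t) (- pdx (LaxQ1 \<rho> new_q new_r lm) x t)
     + (mat2 (- \<i> * inverse lm ^ 2 + \<i> * of_real \<rho>) (new_q x t * inverse lm)
           (new_r x t * inverse lm) (\<i> * inverse lm ^ 2 - \<i> * of_real \<rho>)
        * mat2 (LaxQ1 \<rho> new_q new_r lm x t) (LaxQ2 \<rho> new_q new_r lm x t)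
           (LaxQ3 \<rho> new_q new_r lm x t) (- LaxQ1 \<rho> new_q new_r lm x t)
      - mat2 (LaxQ1 \<rho> new_q new_r lm x t) (LaxQ2 \<rho> new_q new_r lm x t)
           (LaxQ3 \<rho> new_q new_r lm x t) (- LaxQ1 \<rho> new_q new_r lm x t)
        * mat2 (- \<i> * inverse lm ^ 2 + \<i> * of_real \<rho>) (new_q x t * inverse lm)
           (new_r x t * inverse lm) (\<i> * inverse lm ^ 2 - \<i> * of_real \<rho>))" for lm
    unfolding Z_def by (simp add: mdt_LaxP mdx_LaxQ LaxP_mat2 LaxQ_def)
  have "continuous (at lm0) (\<lambda>lm. Z lm $$ (0,0))" "continuous (at lm0) (\<lambda>lm. Z lm $$ (0,1))"
    "continuous (at lm0) (\<lambda>lm. Z lm $$ (1,0))" "continuous (at lm0) (\<lambda>lm. Z lm $$ (1,1))"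
    using continuous_LaxQ_entries[OF smooth2_new_q smooth2_new_r lm0] lm0
    unfolding Z_expanded mat2_mult mat2_add mat2_diff mat2_index
    by (intro continuous_intros; simp)+
  then have "Z lm0 $$ (0,0) = 0" "Z lm0 $$ (0,1) = 0" "Z lm0 $$ (1,0) = 0" "Z lm0 $$ (1,1) = 0"
    using Z_zero S by (meson continuous_vanishing_off_finite)+
  then have "Z lm0 = mat2 0 0 0 0"
    using Z_eta[of lm0] by simp
  then show ?thesis
    unfolding Z_def zero_mat2 .
qed

theorem solves_coupled_new: "solves_coupled \<rho> new_q new_r"
  unfolding solves_coupled_def using new_zero_curvature by simp

end

theorem proposition1:
  fixes \<rho> :: real and q r :: "real \<Rightarrow> real \<Rightarrow> complex" and N :: nat
    and lam :: "nat \<Rightarrow> complex"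
    and phi1 phi2 :: "nat \<Rightarrow> real \<Rightarrow> real \<Rightarrow> complex"
    and A1 A2 A3 A4 :: "nat \<Rightarrow> real \<Rightarrow> real \<Rightarrow> complex"
  assumes sol: "solves_coupled \<rho> q r"
    and N: "N \<ge> 1"
    and lam_nz: "\<forall>k < 2*N. lam k \<noteq> 0"
    and Phi: "\<forall>k < 2*N. lax_solution \<rho> q r (lam k) (phi1 k) (phi2 k)"
    and B12: "\<forall>x t. det (matB12 N lam (\<lambda>k. phi1 k x t) (\<lambda>k. phi2 k x t)) \<noteq> 0"
    and B22: "\<forall>x t. det (matB22 N lam (\<lambda>k. phi1 k x t) (\<lambda>k. phi2 k x t)) \<noteq> 0"
    and Tker: "\<forall>k < 2*N. \<forall>x t.
       darbouxT N A1 A2 A3 A4 (lam k) x t *\<^sub>v cvec2 (phi1 k x t) (phi2 k x t) = 0\<^sub>v 2"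
  defines "qN \<equiv> (\<lambda>x t. q x t - 2 * \<i> * complex_of_real \<rho> * coefA2 N lam phi1 phi2 x t + pdx (coefA2 N lam phi1 phi2) x t)"
    and "rN \<equiv> (\<lambda>x t. r x t + 2 * \<i> * complex_of_real \<rho> * coefA3 N lam phi1 phi2 x t + pdx (coefA3 N lam phi1 phi2) x t)"
  shows "(\<forall>lm. lm \<noteq> 0 \<longrightarrow> (\<forall>x t.
            mdx (darbouxT N A1 A2 A3 A4 lm) x t + darbouxT N A1 A2 A3 A4 lm x t * LaxP \<rho> q r lm x t
              = LaxP \<rho> qN rN lm x t * darbouxT N A1 A2 A3 A4 lm x t
          \<and> mdt (darbouxT N A1 A2 A3 A4 lm) x t + darbouxT N A1 A2 A3 A4 lm x t * LaxQ \<rho> q r lm x t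
              = LaxQ \<rho> qN rN lm x t * darbouxT N A1 A2 A3 A4 lm x t))
         \<and> solves_coupled \<rho> qN rN"
proof -
  interpret darboux_data \<rho> q r N lam phi1 phi2 A1 A2 A3 A4
    using sol N lam_nz Phi B12 B22 Tker by unfold_locales
  have "qN = new_q" "rN = new_r"
    unfolding qN_def rN_def new_q_def new_r_def by (rule refl)+
  then show ?thesis
    using darboux_x_part darboux_t_part solves_coupled_new by simp
qed

end
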